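(* Let $d\ge1$, $f\in\tilde{\mathcal A}_+(d)$, and let $\{\psi_\delta\}_{\delta>0}$ be a family of nonnegative, radial, smooth functions on $\mathbb{R}^d$ with $\operatorname{supp}(\psi_\delta)\subseteq B^d_\delta$ and $\|\psi_\delta\|_{L^1}=1$. Set $\varphi_\delta:=\psi_\delta*\psi_\delta$, $g:=f*\varphi_\delta$, and $h:=\widehat g*\varphi_\delta+g\,\widehat{\varphi_\delta}$. Then for every $\varepsilon>0$ there exists $\delta>0$ such that: (a) $h\in\mathcal S(\mathbb{R}^d)$, $\widehat h=h$, and $h(0)<0$; (b) $r(h)\le r(f)+\varepsilon$.
   Context: Fourier transform: $\widehat f(\xi)=\int_{\mathbb{R}^d} f(x)e^{-2\pi i\langle x,\xi\rangle}\,dx$. $r(f):=\inf\{r>0: f(x)\ge 0 \text{ for all } |x|\ge r\}$. $\mathcal A_+(d)$ is the set of $f:\mathbb{R}^d\to\mathbb{R}$ with $f,\widehat f\in L^1(\mathbb{R}^d)$, $\widehat f$ real-valued, $f$ eventually nonnegative (i.e. $\ge0$ for all large $|x|$) with $\widehat f(0)\le0$, and $\widehat f$ eventually nonnegative with $f(0)\le0$. $\tilde{\mathcal A}_+(d):=\{f\in\mathcal A_+(d):\widehat f=f,\ f(0)<0\}$. $B^d_\delta$ is the open ball of radius $\delta$ centered at the origin; $\mathcal S$ is the Schwartz class. *)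

theory Defs
  imports "HOL-Analysis.Analysis"
begin

text \<open>Euclidean space R^d is modelled as real^'n for a finite index type 'n (d = CARD('n) \<ge> 1).\<close>

definition fourier :: "(real^'n::finite \<Rightarrow> complex) \<Rightarrow> real^'n \<Rightarrow> complex" where
  "fourier f \<xi> = (\<integral>x. f x * cis (- 2 * pi * (x \<bullet> \<xi>)) \<partial>lebesgue)"

abbreviation fourierR :: "(real^'n::finite \<Rightarrow> real) \<Rightarrow> real^'n \<Rightarrow> complex" where
  "fourierR f \<equiv> fourier (\<lambda>x. complex_of_real (f x))"

definition conv :: "(real^'n::finite \<Rightarrow> complex) \<Rightarrow> (real^'n \<Rightarrow> complex) \<Rightarrow> real^'n \<Rightarrow> complex" where
  "conv f g x = (\<integral>y. f y * g (x - y) \<partial>lebesgue)"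

definition eventually_nonneg :: "(real^'n::finite \<Rightarrow> real) \<Rightarrow> bool" where
  "eventually_nonneg f \<longleftrightarrow> (\<exists>R. \<forall>x. norm x \<ge> R \<longrightarrow> f x \<ge> 0)"

definition rad :: "(real^'n::finite \<Rightarrow> real) \<Rightarrow> real" where
  "rad f = Inf {r. r > 0 \<and> (\<forall>x. norm x \<ge> r \<longrightarrow> f x \<ge> 0)}"

definition A_plus :: "(real^'n::finite \<Rightarrow> real) set" where
  "A_plus = {f. integrable lebesgue f \<and> integrable lebesgue (fourierR f)
      \<and> (\<forall>\<xi>. Im (fourierR f \<xi>) = 0)
      \<and> eventually_nonneg f \<and> Re (fourierR f 0) \<le> 0
      \<and> eventually_nonneg (\<lambda>\<xi>. Re (fourierR f \<xi>)) \<and> f 0 \<le> 0}"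

definition A_tilde :: "(real^'n::finite \<Rightarrow> real) set" where
  "A_tilde = {f \<in> A_plus. (\<forall>\<xi>. fourierR f \<xi> = complex_of_real (f \<xi>)) \<and> f 0 < 0}"

text \<open>A family D of all iterated partial derivatives: D [] = f and D (i # \<alpha>) is the
  partial derivative in direction i of D \<alpha>; every D \<alpha> is (Frechet) differentiable everywhere.\<close>
definition partials_family :: "(real^'n::finite \<Rightarrow> 'b::real_normed_vector) \<Rightarrow> ('n list \<Rightarrow> real^'n \<Rightarrow> 'b) \<Rightarrow> bool" where
  "partials_family f D \<longleftrightarrow> D [] = f \<and>
     (\<forall>\<alpha> x. (D \<alpha> has_derivative (\<lambda>v. \<Sum>i\<in>UNIV. (v $ i) *\<^sub>R D (i # \<alpha>) x)) (at x))"

definition smooth_fun :: "(real^'n::finite \<Rightarrow> 'b::real_normed_vector) \<Rightarrow> bool" where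
  "smooth_fun f \<longleftrightarrow> (\<exists>D. partials_family f D)"

definition schwartz :: "(real^'n::finite \<Rightarrow> 'b::real_normed_vector) \<Rightarrow> bool" where
  "schwartz f \<longleftrightarrow> (\<exists>D. partials_family f D \<and>
     (\<forall>\<alpha> (k::nat). \<exists>C. \<forall>x. (1 + norm x) ^ k * norm (D \<alpha> x) \<le> C))"

end

theory Submission
  imports Defs
begin

text \<open>
  Put \<phi> = \<psi> * \<psi>. As \<psi> is even, its Fourier transform is real, so \<phi>^ = (\<psi>^)^2 \<ge> 0;
  moreover \<phi> \<ge> 0, \<integral>\<phi> = 1, and \<phi> vanishes outside the ball of radius 2\<delta>. Since f^ = f, we
  have g^ = f \<phi>^, and the multiplication formula (a b^)^ = a^ * b for even b shows that the
  Fourier transform exchanges the two summands of h, whence h^ = h. Both summands are Schwartz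
  functions: differentiating under the integral moves every derivative onto \<phi>, and \<phi>^ decays
  rapidly while f is bounded. Finally h(x) = \<integral> f(y) (\<phi>^(y) + \<phi>^(x)) \<phi>(x - y) dy averages f over
  the ball of radius 2\<delta> around x with nonnegative weights; so h(x) \<ge> 0 once |x| \<ge> r(f) + 2\<delta>,
  and h(0) is close to 2 f(0) < 0 for small \<delta>, as f is continuous and \<phi>^ is close to 1 near 0.\<close>

section \<open>Lebesgue integrals on Euclidean space\<close>

lemma lebesgue_integral_eq_lborel:
  fixes F :: "'a::euclidean_space \<Rightarrow> 'b::{banach,second_countable_topology}"
  assumes "F \<in> borel_measurable borel"
  shows "integral\<^sup>L lebesgue F = integral\<^sup>L lborel F" "integrable lebesgue F \<longleftrightarrow> integrable lborel F"
  using assms by (simp_all add: integral_completion integrable_completion measurable_lborel1)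

lemma lborel_translation_invariant:
  fixes F :: "'a::euclidean_space \<Rightarrow> 'b::{banach,second_countable_topology}"
  assumes [measurable]: "F \<in> borel_measurable borel"
  shows "(\<integral>x. F (c + x) \<partial>lborel) = (\<integral>x. F x \<partial>lborel)"
    "integrable lborel (\<lambda>x. F (c + x)) \<longleftrightarrow> integrable lborel F"
proof -
  have "(\<integral>x. F x \<partial>lborel) = (\<integral>x. F x \<partial>distr lborel borel ((+) c))" by (simp add: lborel_distr_plus)
  also have "\<dots> = (\<integral>x. F (c + x) \<partial>lborel)" by (rule integral_distr) auto
  finally show "(\<integral>x. F (c + x) \<partial>lborel) = (\<integral>x. F x \<partial>lborel)" ..
  have "integrable lborel F \<longleftrightarrow> integrable (distr lborel borel ((+) c)) F" by (simp add: lborel_distr_plus)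
  also have "\<dots> \<longleftrightarrow> integrable lborel (\<lambda>x. F (c + x))" by (rule integrable_distr_eq) auto
  finally show "integrable lborel (\<lambda>x. F (c + x)) \<longleftrightarrow> integrable lborel F" ..
qed

lemma lborel_reflection_invariant:
  fixes F :: "'a::euclidean_space \<Rightarrow> 'b::{banach,second_countable_topology}"
  assumes [measurable]: "F \<in> borel_measurable borel"
  shows "(\<integral>x. F (- x) \<partial>lborel) = (\<integral>x. F x \<partial>lborel)"
    "integrable lborel (\<lambda>x. F (- x)) \<longleftrightarrow> integrable lborel F"
proof -
  have eq: "lborel = distr lborel borel (uminus :: 'a \<Rightarrow> 'a)"
    using lborel_affine[of "-1" "0::'a"] by (simp add: density_1)
  have "(\<integral>x. F x \<partial>lborel) = (\<integral>x. F x \<partial>distr lborel borel uminus)" by (subst eq) simp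
  also have "\<dots> = (\<integral>x. F (- x) \<partial>lborel)" by (rule integral_distr) auto
  finally show "(\<integral>x. F (- x) \<partial>lborel) = (\<integral>x. F x \<partial>lborel)" ..
  have "integrable lborel F \<longleftrightarrow> integrable (distr lborel borel uminus) F" by (subst eq) simp
  also have "\<dots> \<longleftrightarrow> integrable lborel (\<lambda>x. F (- x))" by (rule integrable_distr_eq) auto
  finally show "integrable lborel (\<lambda>x. F (- x)) \<longleftrightarrow> integrable lborel F" ..
qed

lemma lborel_flip_invariant:
  fixes F :: "'a::euclidean_space \<Rightarrow> 'b::{banach,second_countable_topology}"
  assumes [measurable]: "F \<in> borel_measurable borel"
  shows "(\<integral>x. F (c - x) \<partial>lborel) = (\<integral>x. F x \<partial>lborel)"
    "integrable lborel (\<lambda>x. F (c - x)) \<longleftrightarrow> integrable lborel F"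
proof -
  have m: "(\<lambda>x. F (c + x)) \<in> borel_measurable borel" by measurable
  show "(\<integral>x. F (c - x) \<partial>lborel) = (\<integral>x. F x \<partial>lborel)"
    using lborel_reflection_invariant(1)[OF m] lborel_translation_invariant(1)[OF assms, of c] by simp
  show "integrable lborel (\<lambda>x. F (c - x)) \<longleftrightarrow> integrable lborel F"
    using lborel_reflection_invariant(2)[OF m] lborel_translation_invariant(2)[OF assms, of c] by simp
qed

lemma integrable_mult_bounded:
  fixes a :: "'a \<Rightarrow> 'b::{real_normed_field,banach,second_countable_topology}"
  assumes a: "integrable M a" and g: "g \<in> borel_measurable M" and B: "\<And>x. norm (g x) \<le> B"
  shows "integrable M (\<lambda>x. a x * g x)"
proof (rule Bochner_Integration.integrable_bound[where f="\<lambda>x. B * norm (a x)"])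
  show "integrable M (\<lambda>x. B * norm (a x))" using a by simp
  have "a \<in> borel_measurable M" using a by auto
  thus "(\<lambda>x. a x * g x) \<in> borel_measurable M" using g by measurable
  show "AE x in M. norm (a x * g x) \<le> norm (B * norm (a x))"
  proof (intro AE_I2)
    fix x
    have "norm (a x * g x) \<le> norm (a x) * B" by (simp add: norm_mult mult_left_mono B)
    also have "\<dots> \<le> norm (B * norm (a x))" by (simp add: abs_mult mult.commute mult_right_mono)
    finally show "norm (a x * g x) \<le> norm (B * norm (a x))" .
  qed
qed

lemma continuous_vanishing_outside_bounded:
  fixes v :: "'a::euclidean_space \<Rightarrow> 'b::real_normed_vector"
  assumes c: "continuous_on UNIV v" and z: "\<And>x. R < norm x \<Longrightarrow> v x = 0"
  shows "\<exists>B. \<forall>x. norm (v x) \<le> B"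
proof -
  have "compact (v ` cball 0 R)"
    by (rule compact_continuous_image) (use c in \<open>auto intro: continuous_on_subset\<close>)
  then obtain B where B: "\<And>y. y \<in> v ` cball 0 R \<Longrightarrow> norm y \<le> B"
    using compact_imp_bounded bounded_iff by metis
  show ?thesis
  proof (intro exI allI)
    fix x show "norm (v x) \<le> max B 0"
      using B[of "v x"] z[of x] by (cases "norm x \<le> R") auto
  qed
qed

lemma continuous_vanishing_outside_integrable:
  fixes v :: "'a::euclidean_space \<Rightarrow> 'b::{banach, second_countable_topology}"
  assumes c: "continuous_on UNIV v" and z: "\<And>x. R < norm x \<Longrightarrow> v x = 0"
  shows "integrable lborel v"
proof -
  have "integrable lborel (\<lambda>x. indicator (cball 0 R) x *\<^sub>R v x)"
    by (rule borel_integrable_compact) (use c in \<open>auto intro: continuous_on_subset\<close>)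
  moreover have "(\<lambda>x. indicator (cball 0 R) x *\<^sub>R v x) = v"
    using z by (auto simp: indicator_def fun_eq_iff)
  ultimately show ?thesis by simp
qed

lemma norm_cis_minus_one_le: "norm (cis s - 1) \<le> \<bar>s\<bar>"
proof -
  have "norm (exp (\<i> * complex_of_real s) - (\<Sum>k\<le>0. (\<i> * complex_of_real s) ^ k / fact k))
    \<le> exp \<bar>Re (\<i> * complex_of_real s)\<bar> * norm (\<i> * complex_of_real s) ^ Suc 0 / fact 0"
    by (rule Taylor_exp)
  thus ?thesis by (simp add: cis_conv_exp mult.commute norm_mult)
qed

lemma norm_cis_taylor_le: "norm (cis t - 1 - \<i> * complex_of_real t) \<le> t\<^sup>2"
proof -
  have "norm (exp (\<i> * complex_of_real t) - (\<Sum>k\<le>1. (\<i> * complex_of_real t) ^ k / fact k))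
    \<le> exp \<bar>Re (\<i> * complex_of_real t)\<bar> * norm (\<i> * complex_of_real t) ^ Suc 1 / fact 1"
    by (rule Taylor_exp)
  thus ?thesis by (simp add: cis_conv_exp mult.commute norm_mult algebra_simps power2_eq_square)
qed

section \<open>Families of partial derivatives\<close>

lemma sum_axis_scaleR: "(\<Sum>j\<in>UNIV. (axis i (1::real) $ j) *\<^sub>R c j) = (c i :: 'b::real_vector)"
proof -
  have "(\<Sum>j\<in>UNIV. (axis i (1::real) $ j) *\<^sub>R c j) = (\<Sum>j\<in>UNIV. if j = i then c j else 0)"
    by (rule sum.cong) (auto simp: axis_def)
  thus ?thesis by simp
qed

lemma partials_family_has_derivative:
  "partials_family u D \<Longrightarrow> (D \<alpha> has_derivative (\<lambda>v. \<Sum>i\<in>UNIV. (v $ i) *\<^sub>R D (i # \<alpha>) x)) (at x)"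
  by (simp add: partials_family_def)

lemma partials_family_continuous:
  assumes "partials_family u D" shows "continuous_on UNIV (D \<alpha>)"
proof (rule continuous_at_imp_continuous_on, intro ballI)
  fix x show "isCont (D \<alpha>) x"
    using partials_family_has_derivative[OF assms] by (rule has_derivative_continuous)
qed

lemma partials_family_shift: "partials_family u D \<Longrightarrow> partials_family (D \<beta>) (\<lambda>\<gamma>. D (\<gamma> @ \<beta>))"
  by (simp add: partials_family_def)

lemma partials_family_vanish:
  assumes pf: "partials_family u D" and z: "\<And>x. R \<le> norm x \<Longrightarrow> u x = 0"
  shows "R < norm x \<Longrightarrow> D \<alpha> x = 0"
proof (induction \<alpha> arbitrary: x)
  case Nil
  then show ?case using pf z by (simp add: partials_family_def)
next
  case (Cons i \<alpha>)
  have d1: "(D \<alpha> has_derivative (\<lambda>v. \<Sum>j\<in>UNIV. (v $ j) *\<^sub>R D (j # \<alpha>) x)) (at x)"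
    using partials_family_has_derivative[OF pf] .
  have "((\<lambda>_. 0) has_derivative (\<lambda>v. 0)) (at x)" by simp
  hence d2: "(D \<alpha> has_derivative (\<lambda>v. 0)) (at x)"
    by (rule has_derivative_transform_within_open[where s="{y. R < norm y}"])
       (use Cons in \<open>auto intro: open_Collect_less continuous_intros\<close>)
  have "(\<lambda>v. \<Sum>j\<in>UNIV. (v $ j) *\<^sub>R D (j # \<alpha>) x) = (\<lambda>v. 0)"
    by (rule has_derivative_unique[OF d1 d2])
  from fun_cong[OF this, of "axis i 1"] show ?case by (simp add: sum_axis_scaleR)
qed

lemma partials_family_add:
  assumes A: "partials_family a Da" and B: "partials_family b Db"
  shows "partials_family (\<lambda>x. a x + b x) (\<lambda>\<alpha> x. Da \<alpha> x + Db \<alpha> x)"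
  unfolding partials_family_def
proof (intro conjI allI)
  show "(\<lambda>x. Da [] x + Db [] x) = (\<lambda>x. a x + b x)" using A B by (auto simp: partials_family_def)
  fix \<alpha> x
  show "((\<lambda>x. Da \<alpha> x + Db \<alpha> x) has_derivative (\<lambda>v. \<Sum>i\<in>UNIV. v $ i *\<^sub>R (Da (i # \<alpha>) x + Db (i # \<alpha>) x))) (at x)"
    by (rule has_derivative_add[OF partials_family_has_derivative[OF A] partials_family_has_derivative[OF B],
          THEN has_derivative_eq_rhs])
       (simp add: scaleR_add_right sum.distrib)
qed

text \<open>Leibniz rule: \<open>splits \<alpha>\<close> lists the \<open>2^length \<alpha>\<close> ways of distributing the
  differentiations in \<open>\<alpha>\<close> between the two factors.\<close>

fun splits :: "'a list \<Rightarrow> ('a list \<times> 'a list) list" where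
  "splits [] = [([],[])]"
| "splits (i#\<alpha>) = concat (map (\<lambda>(p,q). [(i#p,q),(p,i#q)]) (splits \<alpha>))"

definition leibniz_family :: "('i list \<Rightarrow> 'a \<Rightarrow> 'b::{times,monoid_add}) \<Rightarrow> ('i list \<Rightarrow> 'a \<Rightarrow> 'b) \<Rightarrow> 'i list \<Rightarrow> 'a \<Rightarrow> 'b" where
  "leibniz_family Da Db \<alpha> x = sum_list (map (\<lambda>(p,q). Da p x * Db q x) (splits \<alpha>))"

lemma sum_list_map_splits_Cons:
  "sum_list (map F (concat (map (\<lambda>(p,q). [(i#p,q),(p,i#q)]) xs))) =
   sum_list (map (\<lambda>(p,q). F (i#p,q) + F (p,i#q)) xs)"
  by (induction xs) auto

lemma has_derivative_sum_list:
  assumes "\<And>p. p \<in> set xs \<Longrightarrow> ((F p) has_derivative (F' p)) (at x)"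
  shows "((\<lambda>x. sum_list (map (\<lambda>p. F p x) xs)) has_derivative (\<lambda>v. sum_list (map (\<lambda>p. F' p v) xs))) (at x)"
  using assms by (induction xs) (auto intro!: derivative_eq_intros)

lemma sum_scaleR_sum_list:
  "(\<Sum>i\<in>UNIV. (v $ i) *\<^sub>R sum_list (map (G i) S)) = sum_list (map (\<lambda>s. \<Sum>i\<in>UNIV. (v $ i) *\<^sub>R G i s) S)"
  for v :: "real^'n::finite" and G :: "'n \<Rightarrow> 'c \<Rightarrow> 'b::real_vector"
  by (induction S) (auto simp: scaleR_add_right sum.distrib)

lemma partials_family_mult:
  fixes a b :: "real^'n::finite \<Rightarrow> 'b::{real_normed_algebra, comm_ring}"
  assumes A: "partials_family a Da" and B: "partials_family b Db"
  shows "partials_family (\<lambda>x. a x * b x) (leibniz_family Da Db)"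
  unfolding partials_family_def
proof (intro conjI allI)
  show "leibniz_family Da Db [] = (\<lambda>x. a x * b x)"
    using A B by (auto simp: leibniz_family_def partials_family_def)
  fix \<alpha> :: "'n list" and x
  let ?d = "\<lambda>(p,q) v. Da p x * (\<Sum>i\<in>UNIV. (v $ i) *\<^sub>R Db (i # q) x) +
               (\<Sum>i\<in>UNIV. (v $ i) *\<^sub>R Da (i # p) x) * Db q x"
  have "((\<lambda>x. sum_list (map (\<lambda>pq. (\<lambda>(p,q) x. Da p x * Db q x) pq x) (splits \<alpha>))) has_derivative
        (\<lambda>v. sum_list (map (\<lambda>pq. ?d pq v) (splits \<alpha>)))) (at x)"
    by (rule has_derivative_sum_list, clarsimp,
        rule has_derivative_mult[OF partials_family_has_derivative[OF A] partials_family_has_derivative[OF B],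
          THEN has_derivative_eq_rhs])
       (simp add: add.commute)
  moreover have "sum_list (map (\<lambda>pq. ?d pq v) (splits \<alpha>)) = (\<Sum>i\<in>UNIV. (v $ i) *\<^sub>R leibniz_family Da Db (i # \<alpha>) x)"
    for v :: "real^'n"
    unfolding leibniz_family_def splits.simps sum_list_map_splits_Cons sum_scaleR_sum_list
    by (rule arg_cong[where f=sum_list], rule map_cong)
       (auto simp: mult_scaleR_left mult_scaleR_right sum_distrib_left sum_distrib_right
             scaleR_add_right sum.distrib)
  ultimately show "(leibniz_family Da Db \<alpha> has_derivative (\<lambda>v. \<Sum>i\<in>UNIV. (v $ i) *\<^sub>R leibniz_family Da Db (i # \<alpha>) x)) (at x)"
    unfolding leibniz_family_def by (simp add: case_prod_beta')
qed

definition coord_family :: "complex \<Rightarrow> 'n::finite \<Rightarrow> 'n list \<Rightarrow> real^'n \<Rightarrow> complex" where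
  "coord_family c i \<alpha> x = (case \<alpha> of [] \<Rightarrow> c * complex_of_real (x $ i) | [j] \<Rightarrow> (if j = i then c else 0) | _ \<Rightarrow> 0)"

lemma partials_family_coord: "partials_family (\<lambda>x. c * complex_of_real (x $ i)) (coord_family c i)"
  unfolding partials_family_def
proof (intro conjI allI)
  show "coord_family c i [] = (\<lambda>x. c * complex_of_real (x $ i))" by (auto simp: coord_family_def)
  fix \<alpha> :: "'a list" and x :: "real^'a"
  show "(coord_family c i \<alpha> has_derivative (\<lambda>v. \<Sum>j\<in>UNIV. v $ j *\<^sub>R coord_family c i (j # \<alpha>) x)) (at x)"
  proof (cases \<alpha>)
    case Nil
    have "(\<Sum>j\<in>UNIV. v $ j *\<^sub>R (if j = i then c else 0)) = c * complex_of_real (v $ i)" for v :: "real^'a"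
    proof -
      have "(\<Sum>j\<in>UNIV. v $ j *\<^sub>R (if j = i then c else 0)) = (\<Sum>j\<in>UNIV. if j = i then v $ j *\<^sub>R c else 0)"
        by (rule sum.cong) auto
      thus ?thesis by (simp add: scaleR_conv_of_real mult.commute)
    qed
    moreover have "((\<lambda>x. c * complex_of_real (x $ i)) has_derivative (\<lambda>v. c * complex_of_real (v $ i))) (at x)"
      using bounded_linear_imp_has_derivative[OF bounded_linear_vec_nth]
      by (intro derivative_eq_intros) auto
    moreover have "coord_family c i [] = (\<lambda>x. c * complex_of_real (x $ i))"
      by (simp add: fun_eq_iff coord_family_def)
    ultimately show ?thesis using Nil by (simp add: coord_family_def)
  next
    case (Cons j \<beta>)
    have "coord_family c i \<alpha> = (\<lambda>_. if \<beta> = [] \<and> j = i then c else 0)"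
      using Cons by (auto simp: coord_family_def fun_eq_iff split: list.splits)
    moreover have "coord_family c i (k # \<alpha>) x = 0" for k using Cons by (simp add: coord_family_def)
    ultimately show ?thesis by simp
  qed
qed

lemma onorm_sum_vec_le:
  fixes c :: "'n::finite \<Rightarrow> 'b::real_normed_vector"
  shows "onorm (\<lambda>v::real^'n. \<Sum>i\<in>UNIV. v$i *\<^sub>R c i) \<le> (\<Sum>i\<in>UNIV. norm (c i))"
proof (rule onorm_le)
  fix v :: "real^'n"
  have "norm (\<Sum>i\<in>UNIV. v$i *\<^sub>R c i) \<le> (\<Sum>i\<in>UNIV. norm (v$i *\<^sub>R c i))" by (rule norm_sum)
  also have "\<dots> \<le> (\<Sum>i\<in>UNIV. norm v * norm (c i))"
    by (rule sum_mono) (simp add: component_le_norm_cart mult_right_mono)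
  finally show "norm (\<Sum>i\<in>UNIV. v$i *\<^sub>R c i) \<le> (\<Sum>i\<in>UNIV. norm (c i)) * norm v"
    by (simp add: sum_distrib_left mult.commute)
qed

lemma partials_family_lipschitz:
  fixes D :: "'n::finite list \<Rightarrow> real^'n \<Rightarrow> 'b::real_normed_vector"
  assumes pf: "partials_family u D" and B: "\<And>\<beta> x. norm (D \<beta> x) \<le> Bf \<beta>"
  shows "norm (D \<alpha> y - D \<alpha> z) \<le> (\<Sum>j\<in>UNIV. Bf (j#\<alpha>)) * norm (y - z)"
proof (rule differentiable_bound[where S=UNIV and f'="\<lambda>x v. \<Sum>j\<in>UNIV. v$j *\<^sub>R D (j#\<alpha>) x"])
  fix x :: "real^'n"
  show "(D \<alpha> has_derivative (\<lambda>v. \<Sum>j\<in>UNIV. v$j *\<^sub>R D (j#\<alpha>) x)) (at x within UNIV)"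
    using partials_family_has_derivative[OF pf] by simp
  show "onorm (\<lambda>v. \<Sum>j\<in>UNIV. v$j *\<^sub>R D (j#\<alpha>) x) \<le> (\<Sum>j\<in>UNIV. Bf (j#\<alpha>))"
    by (rule order_trans[OF onorm_sum_vec_le]) (rule sum_mono, rule B)
qed auto

lemma partials_family_taylor:
  fixes D :: "'n::finite list \<Rightarrow> real^'n \<Rightarrow> 'b::real_normed_vector"
  assumes pf: "partials_family u D" and B: "\<And>\<beta> x. norm (D \<beta> x) \<le> Bf \<beta>"
  shows "norm (D \<alpha> (x+h) - D \<alpha> x - (\<Sum>i\<in>UNIV. h$i *\<^sub>R D (i#\<alpha>) x))
          \<le> (\<Sum>i\<in>UNIV. \<Sum>j\<in>UNIV. Bf (j#i#\<alpha>)) * (norm h)\<^sup>2"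
proof -
  let ?L = "\<lambda>i. \<Sum>j\<in>UNIV. Bf (j#i#\<alpha>)"
  let ?f' = "\<lambda>y v. \<Sum>i\<in>UNIV. v$i *\<^sub>R D (i#\<alpha>) y"
  have "norm (D \<alpha> (x+h) - D \<alpha> x - ?f' x ((x+h) - x)) \<le> norm ((x+h) - x) * ((\<Sum>i\<in>UNIV. ?L i) * norm h)"
  proof (rule differentiable_bound_linearization[where S="cball x (norm h)"])
    fix t :: real assume "t \<in> {0..1}"
    then show "x + t *\<^sub>R (x + h - x) \<in> cball x (norm h)"
      by (auto simp: dist_norm intro: mult_left_le_one_le)
  next
    fix y assume "y \<in> cball x (norm h)"
    show "(D \<alpha> has_derivative ?f' y) (at y within cball x (norm h))"
      using partials_family_has_derivative[OF pf] by (rule has_derivative_at_withinI)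
  next
    fix y assume y: "y \<in> cball x (norm h)"
    have "onorm (?f' y - ?f' x) = onorm (\<lambda>v. \<Sum>i\<in>UNIV. v$i *\<^sub>R (D (i#\<alpha>) y - D (i#\<alpha>) x))"
      by (simp add: fun_diff_def scaleR_diff_right sum_subtractf)
    also have "\<dots> \<le> (\<Sum>i\<in>UNIV. norm (D (i#\<alpha>) y - D (i#\<alpha>) x))" by (rule onorm_sum_vec_le)
    also have "\<dots> \<le> (\<Sum>i\<in>UNIV. ?L i * norm (y - x))"
      by (rule sum_mono) (rule partials_family_lipschitz[OF pf B])
    also have "\<dots> \<le> (\<Sum>i\<in>UNIV. ?L i * norm h)"
    proof (rule sum_mono, rule mult_left_mono)
      show "norm (y - x) \<le> norm h" using y by (simp add: dist_norm norm_minus_commute)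
      fix i show "0 \<le> ?L i" by (rule sum_nonneg) (use B in \<open>meson norm_ge_zero order_trans\<close>)
    qed
    finally show "onorm (?f' y - ?f' x) \<le> (\<Sum>i\<in>UNIV. ?L i) * norm h" by (simp add: sum_distrib_right)
  qed auto
  thus ?thesis by (simp add: power2_eq_square mult_ac)
qed

lemma partials_family_of_real:
  assumes "partials_family u D"
  shows "partials_family (\<lambda>x. of_real (u x) :: 'a::real_normed_algebra_1) (\<lambda>\<alpha> x. of_real (D \<alpha> x))"
  unfolding partials_family_def
proof (intro conjI allI)
  show "(\<lambda>x. of_real (D [] x)) = (\<lambda>x. of_real (u x) :: 'a)" using assms by (simp add: partials_family_def)
  fix \<alpha> x
  show "((\<lambda>x. of_real (D \<alpha> x) :: 'a) has_derivative (\<lambda>v. \<Sum>i\<in>UNIV. v $ i *\<^sub>R of_real (D (i # \<alpha>) x))) (at x)"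
    using has_derivative_of_real[OF partials_family_has_derivative[OF assms, of \<alpha> x]]
    by (simp add: scaleR_conv_of_real)
qed

section \<open>Differentiation under the integral sign\<close>

lemma bounded_linear_sum_vec:
  "bounded_linear (\<lambda>v::real^'n::finite. \<Sum>i\<in>UNIV. v$i *\<^sub>R (c i :: 'b::real_normed_vector))"
  by (intro bounded_linear_sum bounded_linear_scaleR_left bounded_linear_compose[OF _ bounded_linear_vec_nth])

lemma norm_integral_remainder_le:
  fixes K :: "real^'n::finite \<Rightarrow> real^'n \<Rightarrow> 'b::{banach,second_countable_topology}"
  assumes K: "\<And>z. integrable lborel (K z)" and L: "\<And>i. integrable lborel (L i)"
    and w: "integrable lborel w"
    and bd: "\<And>y. norm (K (x+h) y - K x y - (\<Sum>i\<in>UNIV. h$i *\<^sub>R L i y)) \<le> C * (norm h)\<^sup>2 * w y"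
  shows "norm ((\<integral>y. K (x+h) y \<partial>lborel) - (\<integral>y. K x y \<partial>lborel) - (\<Sum>i\<in>UNIV. h$i *\<^sub>R (\<integral>y. L i y \<partial>lborel)))
    \<le> C * (norm h)\<^sup>2 * (\<integral>y. w y \<partial>lborel)"
proof -
  have int: "integrable lborel (\<lambda>y. K (x+h) y - K x y - (\<Sum>i\<in>UNIV. h$i *\<^sub>R L i y))"
    using K L by (intro Bochner_Integration.integrable_diff Bochner_Integration.integrable_sum
        integrable_scaleR_right) auto
  have "(\<integral>y. K (x+h) y \<partial>lborel) - (\<integral>y. K x y \<partial>lborel) - (\<Sum>i\<in>UNIV. h$i *\<^sub>R (\<integral>y. L i y \<partial>lborel))
      = (\<integral>y. K (x+h) y - K x y - (\<Sum>i\<in>UNIV. h$i *\<^sub>R L i y) \<partial>lborel)"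
    using K L by (simp add: Bochner_Integration.integral_diff Bochner_Integration.integrable_diff
        Bochner_Integration.integral_sum Bochner_Integration.integrable_sum integrable_scaleR_right)
  also have "norm \<dots> \<le> (\<integral>y. C * (norm h)\<^sup>2 * w y \<partial>lborel)"
    by (rule Bochner_Integration.integral_norm_bound_integral[OF int]) (use w bd in auto)
  finally show ?thesis by simp
qed

lemma has_derivative_integral_param:
  fixes K :: "real^'n::finite \<Rightarrow> real^'n \<Rightarrow> 'b::{banach,second_countable_topology}"
  assumes K: "\<And>z. integrable lborel (K z)" and L: "\<And>i. integrable lborel (L i)"
    and w: "integrable lborel w"
    and bd: "\<And>h y. norm h < 1 \<Longrightarrow>
      norm (K (x+h) y - K x y - (\<Sum>i\<in>UNIV. h$i *\<^sub>R L i y)) \<le> C * (norm h)\<^sup>2 * w y"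
  shows "((\<lambda>z. \<integral>y. K z y \<partial>lborel) has_derivative (\<lambda>h. \<Sum>i\<in>UNIV. h$i *\<^sub>R (\<integral>y. L i y \<partial>lborel))) (at x)"
  unfolding has_derivative_at
proof
  show "bounded_linear (\<lambda>h. \<Sum>i\<in>UNIV. h$i *\<^sub>R (\<integral>y. L i y \<partial>lborel))" by (rule bounded_linear_sum_vec)
  let ?W = "\<integral>y. w y \<partial>lborel"
  let ?R = "\<lambda>h. (\<integral>y. K (x+h) y \<partial>lborel) - (\<integral>y. K x y \<partial>lborel) - (\<Sum>i\<in>UNIV. h$i *\<^sub>R (\<integral>y. L i y \<partial>lborel))"
  have "\<forall>\<^sub>F h in at (0::real^'n). norm h < 1 \<and> h \<noteq> 0"
    unfolding eventually_at by (intro exI[of _ 1]) (auto simp: dist_norm)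
  hence "\<forall>\<^sub>F h in at 0. norm (norm (?R h) / norm h) \<le> C * ?W * norm h"
  proof (rule eventually_mono)
    fix h :: "real^'n" assume h: "norm h < 1 \<and> h \<noteq> 0"
    have "norm (?R h) \<le> C * (norm h)\<^sup>2 * ?W"
      by (rule norm_integral_remainder_le[OF K L w bd]) (use h in simp)
    with h show "norm (norm (?R h) / norm h) \<le> C * ?W * norm h"
      by (simp add: divide_le_eq power2_eq_square mult_ac)
  qed
  moreover have "((\<lambda>h. C * ?W * norm h) \<longlongrightarrow> 0) (at 0)"
    by (auto intro!: tendsto_eq_intros)
  ultimately show "(\<lambda>h. norm (?R h) / norm h) \<midarrow>0\<rightarrow> 0"
    by (rule Lim_null_comparison)
qed

section \<open>The Fourier transform of test functions\<close>

lemma cis_inner_borel[measurable]: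
  "(\<lambda>x::real^'n::finite. cis (- 2 * pi * (x \<bullet> \<xi>))) \<in> borel_measurable borel"
  by (intro borel_measurable_continuous_onI continuous_intros)

lemma cis_inner_lebesgue[measurable]:
  "(\<lambda>x::real^'n::finite. cis (- 2 * pi * (x \<bullet> \<xi>))) \<in> borel_measurable lebesgue"
  by (rule measurable_completion, unfold measurable_lborel2, rule cis_inner_borel)

lemma cis_borel[measurable]: "cis \<in> borel_measurable borel"
  by (intro borel_measurable_continuous_onI continuous_intros)

lemma fourier_lborel:
  fixes u :: "real^'n::finite \<Rightarrow> complex"
  assumes [measurable]: "u \<in> borel_measurable borel"
  shows "fourier u \<xi> = (\<integral>x. u x * cis (- 2 * pi * (x \<bullet> \<xi>)) \<partial>lborel)"
  unfolding fourier_def by (rule lebesgue_integral_eq_lborel(1)) measurable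

lemma norm_fourier_le:
  fixes u :: "real^'n::finite \<Rightarrow> complex"
  assumes [measurable]: "u \<in> borel_measurable borel"
  shows "norm (fourier u \<xi>) \<le> (\<integral>x. norm (u x) \<partial>lborel)"
proof -
  have "norm (fourier u \<xi>) \<le> (\<integral>x. norm (u x * cis (- 2 * pi * (x \<bullet> \<xi>))) \<partial>lborel)"
    unfolding fourier_lborel[OF assms(1)] by (rule integral_norm_bound)
  also have "\<dots> = (\<integral>x. norm (u x) \<partial>lborel)" by (simp add: norm_mult)
  finally show ?thesis .
qed

lemma fourier_continuous:
  fixes a :: "real^'n::finite \<Rightarrow> complex"
  assumes a: "integrable lebesgue a"
  shows "continuous_on UNIV (fourier a)"
proof (rule continuous_at_imp_continuous_on, intro ballI continuous_at_sequentiallyI)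
  fix \<xi> :: "real^'n" and u :: "nat \<Rightarrow> real^'n" assume u: "u \<longlonglongrightarrow> \<xi>"
  have [measurable]: "a \<in> borel_measurable lebesgue" using a by auto
  show "(\<lambda>n. fourier a (u n)) \<longlonglongrightarrow> fourier a \<xi>"
    unfolding fourier_def
  proof (rule integral_dominated_convergence[where w="\<lambda>x. norm (a x)"])
    show "integrable lebesgue (\<lambda>x. norm (a x))" using a by simp
    show "AE x in lebesgue. (\<lambda>n. a x * cis (- 2 * pi * (x \<bullet> u n))) \<longlonglongrightarrow> a x * cis (- 2 * pi * (x \<bullet> \<xi>))"
      by (intro AE_I2 tendsto_intros u)
    show "AE x in lebesgue. norm (a x * cis (- 2 * pi * (x \<bullet> u n))) \<le> norm (a x)" for n
      by (simp add: norm_mult)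
  qed measurable
qed

lemma borel_measurable_fourier:
  fixes a :: "real^'n::finite \<Rightarrow> complex"
  assumes a: "integrable lborel a" and [measurable]: "a \<in> borel_measurable borel"
  shows "fourier a \<in> borel_measurable borel"
proof -
  have "integrable lebesgue a" using a lebesgue_integral_eq_lborel(2)[of a] by simp
  thus ?thesis by (rule borel_measurable_continuous_onI[OF fourier_continuous])
qed

definition compact_cont :: "(real^'n::finite \<Rightarrow> complex) \<Rightarrow> bool" where
  "compact_cont v \<longleftrightarrow> continuous_on UNIV v \<and> (\<exists>R. \<forall>x. R < norm x \<longrightarrow> v x = 0)"

lemma compact_cont_integrable: "compact_cont v \<Longrightarrow> integrable lborel v"
  unfolding compact_cont_def using continuous_vanishing_outside_integrable by blast

lemma compact_cont_borel: "compact_cont v \<Longrightarrow> v \<in> borel_measurable borel"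
  unfolding compact_cont_def by (simp add: borel_measurable_continuous_onI)

lemma compact_cont_mult_left:
  "compact_cont v \<Longrightarrow> continuous_on UNIV g \<Longrightarrow> compact_cont (\<lambda>x. v x * g x)"
  unfolding compact_cont_def by (auto intro: continuous_intros)

lemma compact_cont_mult_right:
  "compact_cont v \<Longrightarrow> continuous_on UNIV g \<Longrightarrow> compact_cont (\<lambda>x. g x * v x)"
  unfolding compact_cont_def by (auto intro: continuous_intros)

lemma fourier_add:
  fixes a b :: "real^'n::finite \<Rightarrow> complex"
  assumes a: "integrable lborel a" and [measurable]: "a \<in> borel_measurable borel"
    and b: "integrable lborel b" and [measurable]: "b \<in> borel_measurable borel"
  shows "fourier (\<lambda>x. a x + b x) \<xi> = fourier a \<xi> + fourier b \<xi>"
proof -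
  have "integrable lborel (\<lambda>x. a x * cis (- 2 * pi * (x \<bullet> \<xi>)))"
    "integrable lborel (\<lambda>x. b x * cis (- 2 * pi * (x \<bullet> \<xi>)))"
    by (rule integrable_mult_bounded[where B=1], simp_all add: a b)+
  thus ?thesis by (simp add: fourier_lborel distrib_right)
qed

lemma norm_cis_inner_remainder_le:
  fixes y \<xi> h :: "'a::real_inner"
  shows "norm (cis (- 2 * pi * (y \<bullet> (\<xi> + h))) - cis (- 2 * pi * (y \<bullet> \<xi>))
           - \<i> * complex_of_real (- 2 * pi * (y \<bullet> h)) * cis (- 2 * pi * (y \<bullet> \<xi>)))
         \<le> 4 * pi\<^sup>2 * (norm h)\<^sup>2 * (norm y)\<^sup>2"
proof -
  let ?t = "- 2 * pi * (y \<bullet> h)"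
  let ?E = "cis (- 2 * pi * (y \<bullet> \<xi>))"
  have eq: "cis (- 2 * pi * (y \<bullet> (\<xi> + h))) = ?E * cis ?t"
    by (simp add: inner_add_right cis_mult algebra_simps)
  have alg: "E * T - E - z * E = E * (T - 1 - z)" for E T z :: complex
    by (simp add: algebra_simps)
  have "norm (cis (- 2 * pi * (y \<bullet> (\<xi> + h))) - ?E - \<i> * complex_of_real ?t * ?E)
      = norm (cis ?t - 1 - \<i> * complex_of_real ?t)"
    unfolding eq alg norm_mult norm_cis by simp
  also have "\<dots> \<le> ?t\<^sup>2" by (rule norm_cis_taylor_le)
  also have "\<dots> \<le> 4 * pi\<^sup>2 * (norm h)\<^sup>2 * (norm y)\<^sup>2"
  proof -
    have "\<bar>y \<bullet> h\<bar>\<^sup>2 \<le> (norm y * norm h)\<^sup>2"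
      by (rule power_mono[OF Cauchy_Schwarz_ineq2]) simp
    thus ?thesis by (simp add: power_mult_distrib mult_ac)
  qed
  finally show ?thesis .
qed

lemma fourier_has_derivative:
  fixes v :: "real^'n::finite \<Rightarrow> complex"
  assumes v: "compact_cont v"
  shows "(fourier v has_derivative
          (\<lambda>h. \<Sum>i\<in>UNIV. h$i *\<^sub>R fourier (\<lambda>x. (- 2 * pi * \<i> * complex_of_real (x$i)) * v x) \<xi>)) (at \<xi>)"
proof -
  let ?E = "\<lambda>\<eta> x::real^'n. cis (- 2 * pi * (x \<bullet> \<eta>))"
  let ?K = "\<lambda>\<eta> x. v x * ?E \<eta> x"
  let ?L = "\<lambda>i x. (- 2 * pi * \<i> * complex_of_real (x$i)) * v x * ?E \<xi> x"
  have ccL: "compact_cont (\<lambda>x. (- 2 * pi * \<i> * complex_of_real (x$i)) * v x)" for i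
    by (rule compact_cont_mult_right[OF v]) (intro continuous_intros)
  have eqL: "fourier (\<lambda>x. (- 2 * pi * \<i> * complex_of_real (x$i)) * v x) \<xi> = (\<integral>x. ?L i x \<partial>lborel)" for i
    by (subst fourier_lborel[OF compact_cont_borel[OF ccL]]) (simp add: mult.assoc)
  have "((\<lambda>\<eta>. \<integral>x. ?K \<eta> x \<partial>lborel) has_derivative (\<lambda>h. \<Sum>i\<in>UNIV. h$i *\<^sub>R (\<integral>x. ?L i x \<partial>lborel))) (at \<xi>)"
  proof (rule has_derivative_integral_param[where C="4 * pi\<^sup>2"])
    show "integrable lborel (?K z)" for z
      by (rule compact_cont_integrable, rule compact_cont_mult_left[OF v]) (intro continuous_intros)
    show "integrable lborel (?L i)" for i
      by (rule compact_cont_integrable, rule compact_cont_mult_left[OF ccL]) (intro continuous_intros)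
    show "integrable lborel (\<lambda>x. norm (v x) * (norm x)\<^sup>2)"
      using v unfolding compact_cont_def by (auto intro!: continuous_intros continuous_vanishing_outside_integrable)
    fix h y :: "real^'n"
    have "(\<Sum>i\<in>UNIV. h$i *\<^sub>R ?L i y) = v y * (\<i> * complex_of_real (- 2 * pi * (y \<bullet> h)) * ?E \<xi> y)"
      by (simp add: scaleR_conv_of_real inner_vec_def sum_distrib_left sum_distrib_right mult_ac)
    hence "norm (?K (\<xi> + h) y - ?K \<xi> y - (\<Sum>i\<in>UNIV. h$i *\<^sub>R ?L i y))
        = norm (v y) * norm (?E (\<xi> + h) y - ?E \<xi> y - \<i> * complex_of_real (- 2 * pi * (y \<bullet> h)) * ?E \<xi> y)"
      by (simp only: right_diff_distrib[symmetric] norm_mult)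
    also have "\<dots> \<le> norm (v y) * (4 * pi\<^sup>2 * (norm h)\<^sup>2 * (norm y)\<^sup>2)"
      by (rule mult_left_mono[OF norm_cis_inner_remainder_le]) simp
    finally show "norm (?K (\<xi> + h) y - ?K \<xi> y - (\<Sum>i\<in>UNIV. h$i *\<^sub>R ?L i y))
        \<le> 4 * pi\<^sup>2 * (norm h)\<^sup>2 * (norm (v y) * (norm y)\<^sup>2)"
      by (simp add: mult_ac)
  qed
  moreover have "fourier v = (\<lambda>\<eta>. \<integral>x. ?K \<eta> x \<partial>lborel)"
    by (rule ext, rule fourier_lborel[OF compact_cont_borel[OF v]])
  ultimately show ?thesis unfolding eqL by simp
qed

lemma fourier_translate:
  fixes v :: "real^'n::finite \<Rightarrow> complex"
  assumes [measurable]: "v \<in> borel_measurable borel"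
  shows "(\<integral>x. v (x + p) * cis (- 2 * pi * (x \<bullet> \<xi>)) \<partial>lborel) = cis (2 * pi * (p \<bullet> \<xi>)) * fourier v \<xi>"
proof -
  let ?E = "\<lambda>x::real^'n. cis (- 2 * pi * (x \<bullet> \<xi>))"
  let ?G = "\<lambda>z. v z * cis (- 2 * pi * ((z - p) \<bullet> \<xi>))"
  have "(\<integral>x. v (x + p) * ?E x \<partial>lborel) = (\<integral>x. ?G (p + x) \<partial>lborel)" by (simp add: add.commute)
  also have "\<dots> = (\<integral>z. ?G z \<partial>lborel)" by (rule lborel_translation_invariant(1)) measurable
  also have "\<dots> = (\<integral>z. cis (2 * pi * (p \<bullet> \<xi>)) * (v z * ?E z) \<partial>lborel)"
  proof (rule Bochner_Integration.integral_cong)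
    fix z :: "real^'n"
    have "cis (2 * pi * (p \<bullet> \<xi>)) * ?E z = cis (- 2 * pi * ((z - p) \<bullet> \<xi>))"
      unfolding cis_mult by (simp add: inner_diff_left algebra_simps)
    thus "?G z = cis (2 * pi * (p \<bullet> \<xi>)) * (v z * ?E z)" by (simp add: mult_ac)
  qed simp
  also have "\<dots> = cis (2 * pi * (p \<bullet> \<xi>)) * fourier v \<xi>"
    by (simp add: fourier_lborel)
  finally show ?thesis .
qed

lemma has_derivative_translate_integral:
  fixes v :: "real^'n::finite \<Rightarrow> complex"
  assumes pf: "partials_family v D" and cD: "\<And>\<alpha>. continuous_on UNIV (D \<alpha>)"
    and zD: "\<And>\<alpha> x. R < norm x \<Longrightarrow> D \<alpha> x = 0" and B: "\<And>\<beta> x. norm (D \<beta> x) \<le> Bf \<beta>"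
  shows "((\<lambda>p. \<integral>x. v (x + p) * cis (- 2 * pi * (x \<bullet> \<xi>)) \<partial>lborel) has_derivative
          (\<lambda>h. \<Sum>i\<in>UNIV. h$i *\<^sub>R (\<integral>x. D [i] x * cis (- 2 * pi * (x \<bullet> \<xi>)) \<partial>lborel))) (at 0)"
proof -
  let ?E = "\<lambda>x::real^'n. cis (- 2 * pi * (x \<bullet> \<xi>))"
  let ?K = "\<lambda>p x. v (x + p) * ?E x"
  let ?L = "\<lambda>i x. D [i] x * ?E x"
  let ?C = "\<Sum>i\<in>UNIV. \<Sum>j\<in>UNIV. Bf (j#i#[])"
  have v0: "D [] = v" using pf by (simp add: partials_family_def)
  have cv: "continuous_on UNIV v" using cD[of "[]"] v0 by simp
  show ?thesis
  proof (rule has_derivative_integral_param[where C="?C" and w="indicator (cball 0 (R+1))"])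
    show "integrable lborel (?K z)" for z
    proof (rule continuous_vanishing_outside_integrable[where R="R + norm z"])
      show "continuous_on UNIV (?K z)"
        by (intro continuous_intros continuous_on_compose2[OF cv]) auto
      fix x :: "real^'n" assume "R + norm z < norm x"
      hence "R < norm (x + z)" using norm_triangle_ineq2[of x "-z"] by simp
      thus "?K z x = 0" using zD[of "x+z" "[]"] v0 by simp
    qed
    show "integrable lborel (?L i)" for i
      using cD zD
      by (intro compact_cont_integrable compact_cont_mult_left) (auto simp: compact_cont_def intro!: continuous_intros)
    show "integrable lborel (indicator (cball 0 (R+1)) :: real^'n \<Rightarrow> real)"
      using emeasure_lborel_cball_finite[of "0::real^'n" "R+1"]
      by (simp add: integrable_indicator_iff top_unique[symmetric] less_top)
    fix h y :: "real^'n" assume h: "norm h < 1"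
    have eq: "?K (0 + h) y - ?K 0 y - (\<Sum>i\<in>UNIV. h$i *\<^sub>R ?L i y)
        = ?E y * (D [] (y + h) - D [] y - (\<Sum>i\<in>UNIV. h$i *\<^sub>R D [i] y))"
      by (simp add: v0 algebra_simps scaleR_conv_of_real sum_distrib_left sum_distrib_right)
    show "norm (?K (0 + h) y - ?K 0 y - (\<Sum>i\<in>UNIV. h$i *\<^sub>R ?L i y))
        \<le> ?C * (norm h)\<^sup>2 * indicator (cball 0 (R+1)) y"
    proof (cases "norm y \<le> R + 1")
      case True
      have "norm (D [] (y + h) - D [] y - (\<Sum>i\<in>UNIV. h$i *\<^sub>R D [i] y)) \<le> ?C * (norm h)\<^sup>2"
        by (rule partials_family_taylor[OF pf B])
      thus ?thesis using True unfolding eq by (simp add: norm_mult)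
    next
      case False
      hence "R < norm (y + h)" using h norm_triangle_ineq2[of y "-h"] by simp
      hence "D [] (y + h) = 0" "D [] y = 0" "D [i] y = 0" for i using False zD by auto
      thus ?thesis unfolding eq using False by simp
    qed
  qed
qed

text \<open>Both sides are the derivative at \<open>p = 0\<close> of the Fourier transform of \<open>v (\<cdot> + p)\<close>.\<close>

lemma fourier_partial:
  fixes v :: "real^'n::finite \<Rightarrow> complex"
  assumes pf: "partials_family v D" and cD: "\<And>\<alpha>. continuous_on UNIV (D \<alpha>)"
    and zD: "\<And>\<alpha> x. R < norm x \<Longrightarrow> D \<alpha> x = 0" and B: "\<And>\<beta> x. norm (D \<beta> x) \<le> Bf \<beta>"
  shows "fourier (D [i]) \<xi> = 2 * pi * \<i> * complex_of_real (\<xi> $ i) * fourier v \<xi>"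
proof -
  let ?L = "\<lambda>i. \<integral>x. D [i] x * cis (- 2 * pi * (x \<bullet> \<xi>)) \<partial>lborel"
  have cv: "continuous_on UNIV v" using cD[of "[]"] pf by (simp add: partials_family_def)
  have "((\<lambda>p. \<integral>x. v (x + p) * cis (- 2 * pi * (x \<bullet> \<xi>)) \<partial>lborel) has_derivative
         (\<lambda>h. (2 * pi * (h \<bullet> \<xi>)) *\<^sub>R (\<i> * fourier v \<xi>))) (at 0)"
    unfolding fourier_translate[OF borel_measurable_continuous_onI[OF cv]]
    by (auto intro!: derivative_eq_intros)
  with has_derivative_translate_integral[OF pf cD zD B]
  have "(\<lambda>h. \<Sum>i\<in>UNIV. h$i *\<^sub>R ?L i) = (\<lambda>h. (2 * pi * (h \<bullet> \<xi>)) *\<^sub>R (\<i> * fourier v \<xi>))"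
    by (rule has_derivative_unique)
  from fun_cong[OF this, of "axis i 1"]
  have "?L i = (2 * pi * \<xi> $ i) *\<^sub>R (\<i> * fourier v \<xi>)"
    by (simp add: sum_axis_scaleR inner_axis')
  moreover have "fourier (D [i]) \<xi> = ?L i"
    by (rule fourier_lborel[OF borel_measurable_continuous_onI[OF cD]])
  ultimately show ?thesis by (simp add: scaleR_conv_of_real mult_ac)
qed

lemma fourier_iterated_partial:
  fixes v :: "real^'n::finite \<Rightarrow> complex"
  assumes pf: "partials_family v D" and cD: "\<And>\<alpha>. continuous_on UNIV (D \<alpha>)"
    and zD: "\<And>\<alpha> x. R < norm x \<Longrightarrow> D \<alpha> x = 0" and B: "\<And>\<beta> x. norm (D \<beta> x) \<le> Bf \<beta>"
  shows "fourier (D \<beta>) \<xi> = prod_list (map (\<lambda>i. 2 * pi * \<i> * complex_of_real (\<xi> $ i)) \<beta>) * fourier v \<xi>"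
proof (induction \<beta>)
  case Nil
  then show ?case using pf by (simp add: partials_family_def)
next
  case (Cons i \<beta>)
  have "fourier ((\<lambda>\<gamma>. D (\<gamma> @ \<beta>)) [i]) \<xi> = 2 * pi * \<i> * complex_of_real (\<xi> $ i) * fourier (D \<beta>) \<xi>"
    by (rule fourier_partial[OF partials_family_shift[OF pf], where R=R and Bf="\<lambda>\<gamma>. Bf (\<gamma> @ \<beta>)"])
       (auto intro: cD zD B)
  thus ?case using Cons by simp
qed

definition test_function :: "(real^'n::finite \<Rightarrow> complex) \<Rightarrow> bool" where
  "test_function u \<longleftrightarrow> (\<exists>R. \<forall>x. R \<le> norm x \<longrightarrow> u x = 0) \<and> smooth_fun u"

lemma test_functionE:
  assumes "test_function u"
  obtains D R Bf where "partials_family u D" "\<And>\<alpha>. continuous_on UNIV (D \<alpha>)"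
    "\<And>\<alpha> x. R < norm x \<Longrightarrow> D \<alpha> x = 0" "\<And>\<beta> x. norm (D \<beta> x) \<le> Bf \<beta>"
    "\<And>x. R \<le> norm x \<Longrightarrow> u x = 0"
proof -
  from assms obtain R D where z: "\<And>x. R \<le> norm x \<Longrightarrow> u x = 0" and pf: "partials_family u D"
    unfolding test_function_def smooth_fun_def by blast
  have c: "continuous_on UNIV (D \<alpha>)" for \<alpha> by (rule partials_family_continuous[OF pf])
  have zD: "R < norm x \<Longrightarrow> D \<alpha> x = 0" for \<alpha> x by (rule partials_family_vanish[OF pf z])
  have "\<forall>\<beta>. \<exists>B. \<forall>x. norm (D \<beta> x) \<le> B" using continuous_vanishing_outside_bounded[OF c zD] by blast
  then obtain Bf where "\<forall>\<beta> x. norm (D \<beta> x) \<le> Bf \<beta>" by metis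
  thus ?thesis using that[OF pf c zD _ z] by blast
qed

lemma test_function_compact_cont: "test_function u \<Longrightarrow> compact_cont u"
  unfolding compact_cont_def by (erule test_functionE) (metis partials_family_def)

lemma fourier_test_function_coord_decay:
  fixes v :: "real^'n::finite \<Rightarrow> complex"
  assumes "test_function v"
  shows "\<exists>M. \<forall>\<xi>. \<bar>\<xi> $ i\<bar> ^ k * norm (fourier v \<xi>) \<le> M"
proof -
  obtain D R Bf where pf: "partials_family v D" and cD: "\<And>\<alpha>. continuous_on UNIV (D \<alpha>)"
    and zD: "\<And>\<alpha> x. R < norm x \<Longrightarrow> D \<alpha> x = 0" and B: "\<And>\<beta> x. norm (D \<beta> x) \<le> Bf \<beta>"
    using test_functionE[OF assms] by metis
  have ccD: "compact_cont (D \<alpha>)" for \<alpha> using cD zD unfolding compact_cont_def by blast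
  show ?thesis
  proof (intro exI allI)
    fix \<xi> :: "real^'n"
    have "(2 * pi * \<bar>\<xi> $ i\<bar>) ^ k * norm (fourier v \<xi>) = norm (fourier (D (replicate k i)) \<xi>)"
      using fourier_iterated_partial[OF pf cD zD B, where \<beta>="replicate k i" and \<xi>=\<xi>]
      by (simp add: prod_list_replicate norm_mult norm_power abs_mult)
    also have "\<dots> \<le> (\<integral>x. norm (D (replicate k i) x) \<partial>lborel)"
      by (rule norm_fourier_le[OF compact_cont_borel[OF ccD]])
    finally have *: "(2 * pi * \<bar>\<xi> $ i\<bar>) ^ k * norm (fourier v \<xi>) \<le> (\<integral>x. norm (D (replicate k i) x) \<partial>lborel)" .
    have "\<bar>\<xi> $ i\<bar> ^ k \<le> (2 * pi * \<bar>\<xi> $ i\<bar>) ^ k"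
      by (rule power_mono) (use pi_gt3 in \<open>auto intro: mult_le_cancel_right1[THEN iffD2]\<close>)
    from mult_right_mono[OF this norm_ge_zero[of "fourier v \<xi>"]] *
    show "\<bar>\<xi> $ i\<bar> ^ k * norm (fourier v \<xi>) \<le> (\<integral>x. norm (D (replicate k i) x) \<partial>lborel)"
      by linarith
  qed
qed

lemma one_plus_norm_le_max_coord:
  fixes \<xi> :: "real^'n::finite"
  obtains j where "1 + norm \<xi> \<le> (real CARD('n) + 1) * max 1 \<bar>\<xi> $ j\<bar>"
proof -
  have "Max (range (\<lambda>i. \<bar>\<xi> $ i\<bar>)) \<in> range (\<lambda>i. \<bar>\<xi> $ i\<bar>)" by (rule Max_in) auto
  then obtain j where jeq: "\<bar>\<xi> $ j\<bar> = Max (range (\<lambda>i. \<bar>\<xi> $ i\<bar>))" by (metis imageE)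
  have j: "\<bar>\<xi> $ i\<bar> \<le> max 1 \<bar>\<xi> $ j\<bar>" for i unfolding jeq by (simp add: le_max_iff_disj)
  have "norm \<xi> \<le> (\<Sum>i\<in>UNIV. \<bar>\<xi> $ i\<bar>)" by (rule norm_le_l1_cart)
  also have "\<dots> \<le> (\<Sum>i\<in>(UNIV::'n set). max 1 \<bar>\<xi> $ j\<bar>)" by (rule sum_mono) (rule j)
  finally have "norm \<xi> \<le> real CARD('n) * max 1 \<bar>\<xi> $ j\<bar>" by simp
  hence "1 + norm \<xi> \<le> (real CARD('n) + 1) * max 1 \<bar>\<xi> $ j\<bar>" by (simp add: algebra_simps)
  thus ?thesis by (rule that)
qed

lemma fourier_test_function_decay:
  fixes v :: "real^'n::finite \<Rightarrow> complex"
  assumes v: "test_function v"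
  shows "\<exists>C. \<forall>\<xi>. (1 + norm \<xi>)^k * norm (fourier v \<xi>) \<le> C"
proof -
  have "\<forall>i. \<exists>M. \<forall>\<xi>. \<bar>\<xi> $ i\<bar> ^ k * norm (fourier v \<xi>) \<le> M"
    using fourier_test_function_coord_decay[OF v] by blast
  then obtain M where M: "\<And>i \<xi>. \<bar>\<xi> $ i\<bar> ^ k * norm (fourier v \<xi>) \<le> M i"
    by metis
  define M0 where "M0 = (\<integral>x. norm (v x) \<partial>lborel)"
  have M0: "norm (fourier v \<xi>) \<le> M0" for \<xi>
    unfolding M0_def by (rule norm_fourier_le[OF compact_cont_borel[OF test_function_compact_cont[OF v]]])
  have M0pos: "0 \<le> M0" unfolding M0_def by simp
  have Mpos: "0 \<le> M i" for i using M[where i=i and \<xi>=0] by (smt (verit) mult_nonneg_nonneg norm_ge_zero zero_le_power abs_ge_zero)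
  let ?N = "real CARD('n)"
  show ?thesis
  proof (intro exI allI)
    fix \<xi> :: "real^'n"
    obtain j where j: "1 + norm \<xi> \<le> (?N + 1) * max 1 \<bar>\<xi> $ j\<bar>" by (rule one_plus_norm_le_max_coord)
    have "(1 + norm \<xi>)^k \<le> ((?N + 1) * max 1 \<bar>\<xi> $ j\<bar>)^k" by (rule power_mono[OF j]) simp
    hence A: "(1 + norm \<xi>)^k * norm (fourier v \<xi>) \<le> (?N + 1)^k * (max 1 \<bar>\<xi> $ j\<bar> ^ k * norm (fourier v \<xi>))"
      unfolding mult.assoc[symmetric] power_mult_distrib[symmetric] by (rule mult_right_mono) simp_all
    have "max 1 \<bar>\<xi> $ j\<bar> ^ k * norm (fourier v \<xi>) \<le> M0 + (\<Sum>i\<in>UNIV. M i)"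
    proof (cases "\<bar>\<xi> $ j\<bar> \<le> 1")
      case True
      thus ?thesis using M0[of \<xi>] sum_nonneg[of UNIV M] Mpos by simp
    next
      case False
      moreover have "M j \<le> (\<Sum>i\<in>UNIV. M i)" by (rule member_le_sum) (auto simp: Mpos)
      ultimately show ?thesis using M[of \<xi> j] M0pos by simp
    qed
    with A show "(1 + norm \<xi>)^k * norm (fourier v \<xi>) \<le> (?N + 1)^k * (M0 + (\<Sum>i\<in>UNIV. M i))"
      by (smt (verit) mult_left_mono zero_le_power of_nat_0_le_iff)
  qed
qed

lemma test_function_mult_coord:
  assumes "test_function v" shows "test_function (\<lambda>x. (c * complex_of_real (x$i)) * v x)"
proof -
  obtain D R Bf where pf: "partials_family v D" and zu: "\<And>x. R \<le> norm x \<Longrightarrow> v x = 0"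
    using test_functionE[OF assms] by metis
  show ?thesis unfolding test_function_def smooth_fun_def
    using partials_family_mult[OF partials_family_coord pf] zu by auto
qed

fun coord_monomial_mult :: "'n::finite list \<Rightarrow> (real^'n \<Rightarrow> complex) \<Rightarrow> real^'n \<Rightarrow> complex" where
  "coord_monomial_mult [] v = v"
| "coord_monomial_mult (i#\<alpha>) v = (\<lambda>x. (- 2 * pi * \<i> * complex_of_real (x$i)) * coord_monomial_mult \<alpha> v x)"

lemma test_function_coord_monomial_mult: "test_function v \<Longrightarrow> test_function (coord_monomial_mult \<alpha> v)"
proof (induction \<alpha>)
  case (Cons i \<alpha>)
  show ?case using test_function_mult_coord[OF Cons.IH[OF Cons.prems], of "- 2 * pi * \<i>" i] by simp
qed simp

lemma fourier_test_function_partials: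
  assumes "test_function v"
  shows "partials_family (fourier v) (\<lambda>\<alpha>. fourier (coord_monomial_mult \<alpha> v))"
  unfolding partials_family_def
  using fourier_has_derivative[OF test_function_compact_cont[OF test_function_coord_monomial_mult[OF assms]]]
  by simp

lemma fourier_test_function_partials_decay:
  "test_function v \<Longrightarrow> \<exists>C. \<forall>x. (1 + norm x) ^ k * norm (fourier (coord_monomial_mult \<alpha> v) x) \<le> C"
  by (rule fourier_test_function_decay[OF test_function_coord_monomial_mult])

section \<open>Convolution\<close>

lemma conv_lborel:
  fixes a b :: "real^'n::finite \<Rightarrow> complex"
  assumes [measurable]: "a \<in> borel_measurable borel" "b \<in> borel_measurable borel"
  shows "conv a b x = (\<integral>y. a y * b (x - y) \<partial>lborel)"
  unfolding conv_def by (rule lebesgue_integral_eq_lborel(1)) measurable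

lemma norm_conv_le:
  fixes a b :: "real^'n::finite \<Rightarrow> complex"
  assumes a: "integrable lborel a" and [measurable]: "a \<in> borel_measurable borel"
    and [measurable]: "b \<in> borel_measurable borel" and B: "\<And>x. norm (b x) \<le> B"
  shows "norm (conv a b x) \<le> (\<integral>y. norm (a y) \<partial>lborel) * B"
proof -
  have "integrable lborel (\<lambda>y. a y * b (x - y))"
    by (rule integrable_mult_bounded[OF a _ B]) measurable
  hence "norm (conv a b x) \<le> (\<integral>y. norm (a y) * B \<partial>lborel)"
    unfolding conv_lborel[OF assms(2,3)]
    by (rule Bochner_Integration.integral_norm_bound_integral) (use a B in \<open>auto simp: norm_mult mult_left_mono\<close>)
  thus ?thesis by simp
qed

lemma partials_family_conv:
  fixes a :: "real^'n::finite \<Rightarrow> complex"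
  assumes a: "integrable lborel a" and [measurable]: "a \<in> borel_measurable borel"
    and pf: "partials_family v D" and cD: "\<And>\<alpha>. continuous_on UNIV (D \<alpha>)"
    and B: "\<And>\<beta> x. norm (D \<beta> x) \<le> Bf \<beta>"
  shows "partials_family (conv a v) (\<lambda>\<alpha>. conv a (D \<alpha>))"
  unfolding partials_family_def
proof (intro conjI allI)
  have [measurable]: "D \<alpha> \<in> borel_measurable borel" for \<alpha> by (rule borel_measurable_continuous_onI[OF cD])
  have cv: "conv a (D \<alpha>) = (\<lambda>x. \<integral>y. a y * D \<alpha> (x - y) \<partial>lborel)" for \<alpha>
    by (rule ext, rule conv_lborel) measurable
  have int: "integrable lborel (\<lambda>y. a y * D \<alpha> (x - y))" for \<alpha> x
    by (rule integrable_mult_bounded[OF a _ B]) measurable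
  show "conv a (D []) = conv a v" using pf by (simp add: partials_family_def)
  fix \<alpha> :: "'n list" and x :: "real^'n"
  show "(conv a (D \<alpha>) has_derivative (\<lambda>h. \<Sum>i\<in>UNIV. h $ i *\<^sub>R conv a (D (i # \<alpha>)) x)) (at x)"
    unfolding cv
  proof (rule has_derivative_integral_param[where C="\<Sum>i\<in>UNIV. \<Sum>j\<in>UNIV. Bf (j#i#\<alpha>)" and w="\<lambda>y. norm (a y)"])
    show "integrable lborel (\<lambda>y. a y * D \<alpha> (z - y))" for z by (rule int)
    show "integrable lborel (\<lambda>y. a y * D (i # \<alpha>) (x - y))" for i by (rule int)
    show "integrable lborel (\<lambda>y. norm (a y))" using a by simp
    fix h y :: "real^'n"
    have "a y * D \<alpha> (x + h - y) - a y * D \<alpha> (x - y) - (\<Sum>i\<in>UNIV. h $ i *\<^sub>R (a y * D (i # \<alpha>) (x - y)))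
        = a y * (D \<alpha> ((x - y) + h) - D \<alpha> (x - y) - (\<Sum>i\<in>UNIV. h $ i *\<^sub>R D (i # \<alpha>) (x - y)))"
      by (simp add: algebra_simps scaleR_conv_of_real sum_distrib_left)
    also have "norm \<dots> \<le> norm (a y) * ((\<Sum>i\<in>UNIV. \<Sum>j\<in>UNIV. Bf (j#i#\<alpha>)) * (norm h)\<^sup>2)"
      unfolding norm_mult by (rule mult_left_mono[OF partials_family_taylor[OF pf B]]) simp
    finally show "norm (a y * D \<alpha> (x + h - y) - a y * D \<alpha> (x - y) - (\<Sum>i\<in>UNIV. h $ i *\<^sub>R (a y * D (i # \<alpha>) (x - y))))
        \<le> (\<Sum>i\<in>UNIV. \<Sum>j\<in>UNIV. Bf (j#i#\<alpha>)) * (norm h)\<^sup>2 * norm (a y)" by (simp add: mult_ac)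
  qed
qed

lemma integrable_pair_conv_kernel:
  fixes a b :: "real^'n::finite \<Rightarrow> complex" and s :: "real^'n \<Rightarrow> real^'n"
  assumes a: "integrable lborel a" and [measurable]: "a \<in> borel_measurable borel"
    and b: "integrable lborel b" and [measurable]: "b \<in> borel_measurable borel"
    and [measurable]: "s \<in> borel_measurable borel"
    and E[measurable]: "(\<lambda>(y,x). E y x) \<in> borel_measurable (lborel \<Otimes>\<^sub>M lborel)"
    and E1: "\<And>y x. norm (E y x) \<le> 1"
  shows "integrable (lborel \<Otimes>\<^sub>M lborel) (\<lambda>(y,x). a y * b (x - s y) * E y x)"
proof (rule lborel_pair.Fubini_integrable)
  show "(\<lambda>(y,x). a y * b (x - s y) * E y x) \<in> borel_measurable (lborel \<Otimes>\<^sub>M lborel)" by measurable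
  have bt: "integrable lborel (\<lambda>x. b (x - s y))" for y
    using lborel_translation_invariant(2)[of b "- s y"] b by simp
  have bn: "(\<integral>x. norm (b (x - s y)) \<partial>lborel) = (\<integral>x. norm (b x) \<partial>lborel)" for y
    using lborel_translation_invariant(1)[of "\<lambda>x. norm (b x)" "- s y"] by simp
  have i2: "integrable lborel (\<lambda>x. a y * b (x - s y) * E y x)" for y
  proof -
    have "(\<lambda>x. E y x) \<in> borel_measurable lborel" using E by measurable
    hence "integrable lborel (\<lambda>x. (a y * b (x - s y)) * E y x)"
      by (intro integrable_mult_bounded[OF _ _ E1]) (use bt in auto)
    thus ?thesis by simp
  qed
  show "AE y in lborel. integrable lborel (\<lambda>x. (\<lambda>(y,x). a y * b (x - s y) * E y x) (y, x))"
    using i2 by simp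
  show "integrable lborel (\<lambda>y. \<integral>x. norm ((\<lambda>(y,x). a y * b (x - s y) * E y x) (y, x)) \<partial>lborel)"
  proof (rule Bochner_Integration.integrable_bound[where f="\<lambda>y. norm (a y) * (\<integral>x. norm (b x) \<partial>lborel)"])
    show "integrable lborel (\<lambda>y. norm (a y) * (\<integral>x. norm (b x) \<partial>lborel))" using a by simp
    show "(\<lambda>y. \<integral>x. norm ((\<lambda>(y,x). a y * b (x - s y) * E y x) (y, x)) \<partial>lborel) \<in> borel_measurable lborel"
      by measurable
    show "AE y in lborel. norm (\<integral>x. norm ((\<lambda>(y,x). a y * b (x - s y) * E y x) (y, x)) \<partial>lborel)
       \<le> norm (norm (a y) * (\<integral>x. norm (b x) \<partial>lborel))"
    proof (intro AE_I2)
      fix y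
      have "(\<integral>x. norm (a y * b (x - s y) * E y x) \<partial>lborel) \<le> (\<integral>x. norm (a y) * norm (b (x - s y)) \<partial>lborel)"
        by (rule integral_mono[OF integrable_norm[OF i2]]) (use bt E1 in \<open>auto simp: norm_mult intro: mult_left_le\<close>)
      also have "\<dots> = norm (a y) * (\<integral>x. norm (b x) \<partial>lborel)" by (simp add: bn)
      finally show "norm (\<integral>x. norm ((\<lambda>(y,x). a y * b (x - s y) * E y x) (y, x)) \<partial>lborel)
       \<le> norm (norm (a y) * (\<integral>x. norm (b x) \<partial>lborel))"
        by (simp add: integral_nonneg_AE)
    qed
  qed
qed

lemma integrable_conv:
  fixes a b :: "real^'n::finite \<Rightarrow> complex"
  assumes a: "integrable lborel a" and [measurable]: "a \<in> borel_measurable borel"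
    and b: "integrable lborel b" and [measurable]: "b \<in> borel_measurable borel"
  shows "integrable lborel (conv a b)" "conv a b \<in> borel_measurable borel"
proof -
  have "integrable (lborel \<Otimes>\<^sub>M lborel) (\<lambda>(y,x). a y * b (x - (\<lambda>y. y) y) * (\<lambda>y x. 1) y x)"
    by (rule integrable_pair_conv_kernel[OF a _ b]) auto
  hence "integrable lborel (\<lambda>x. \<integral>y. a y * b (x - y) \<partial>lborel)"
    using lborel_pair.integrable_snd[of "\<lambda>y x. a y * b (x - y)"] by simp
  moreover have "conv a b = (\<lambda>x. \<integral>y. a y * b (x - y) \<partial>lborel)"
    by (rule ext, rule conv_lborel) auto
  ultimately show i: "integrable lborel (conv a b)" by simp
  thus "conv a b \<in> borel_measurable borel" using borel_measurable_integrable by fastforce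
qed

lemma fourier_conv:
  fixes a b :: "real^'n::finite \<Rightarrow> complex"
  assumes a: "integrable lborel a" and [measurable]: "a \<in> borel_measurable borel"
    and b: "integrable lborel b" and [measurable]: "b \<in> borel_measurable borel"
  shows "fourier (conv a b) \<xi> = fourier a \<xi> * fourier b \<xi>"
proof -
  let ?E = "\<lambda>x::real^'n. cis (- 2 * pi * (x \<bullet> \<xi>))"
  have [measurable]: "conv a b \<in> borel_measurable borel" by (rule integrable_conv(2)[OF a _ b]) auto
  have I: "integrable (lborel \<Otimes>\<^sub>M lborel) (\<lambda>(y,x). a y * b (x - (\<lambda>y. y) y) * (\<lambda>y x. ?E x) y x)"
    by (rule integrable_pair_conv_kernel[OF a _ b]) auto
  have inner: "(\<integral>x. a y * b (x - y) * ?E x \<partial>lborel) = a y * ?E y * fourier b \<xi>" for y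
  proof -
    have "(\<integral>x. b (x - y) * ?E x \<partial>lborel) = ?E y * fourier b \<xi>"
      using fourier_translate[of b "- y" \<xi>] unfolding cis_mult[symmetric]
      by (simp add: inner_minus_left)
    thus ?thesis by (simp add: mult.assoc)
  qed
  have "fourier (conv a b) \<xi> = (\<integral>x. (\<integral>y. a y * b (x - y) \<partial>lborel) * ?E x \<partial>lborel)"
    by (simp add: fourier_lborel conv_lborel)
  also have "\<dots> = (\<integral>x. (\<integral>y. a y * b (x - y) * ?E x \<partial>lborel) \<partial>lborel)" by simp
  also have "\<dots> = (\<integral>y. (\<integral>x. a y * b (x - y) * ?E x \<partial>lborel) \<partial>lborel)"
    using lborel_pair.Fubini_integral[of "\<lambda>y x. a y * b (x - y) * ?E x"] I by simp
  also have "\<dots> = (\<integral>y. a y * ?E y * fourier b \<xi> \<partial>lborel)" by (simp only: inner)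
  also have "\<dots> = fourier a \<xi> * fourier b \<xi>" by (simp add: fourier_lborel)
  finally show ?thesis .
qed

lemma fourier_mult_fourier_eq_integral:
  fixes a b :: "real^'n::finite \<Rightarrow> complex"
  assumes a: "integrable lborel a" and [measurable]: "a \<in> borel_measurable borel"
    and b: "integrable lborel b" and [measurable]: "b \<in> borel_measurable borel"
  shows "fourier (\<lambda>x. a x * fourier b x) \<xi> = (\<integral>y. b y * fourier a (y + \<xi>) \<partial>lborel)"
proof -
  let ?E = "\<lambda>x::real^'n. cis (- 2 * pi * (x \<bullet> \<xi>))"
  have [measurable]: "fourier b \<in> borel_measurable borel" by (rule borel_measurable_fourier[OF b]) simp
  have I: "integrable (lborel \<Otimes>\<^sub>M lborel) (\<lambda>(x,y). a x * b (y - (\<lambda>_. 0) x) * (\<lambda>x y. cis (- 2 * pi * (y \<bullet> x)) * ?E x) x y)"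
    by (rule integrable_pair_conv_kernel[OF a _ b]) (auto simp: norm_mult)
  have inner: "(\<integral>x. a x * b y * (cis (- 2 * pi * (y \<bullet> x)) * ?E x) \<partial>lborel) = b y * fourier a (y + \<xi>)" for y
  proof -
    have "(\<integral>x. a x * b y * (cis (- 2 * pi * (y \<bullet> x)) * ?E x) \<partial>lborel) = (\<integral>x. b y * (a x * cis (- 2 * pi * (x \<bullet> (y + \<xi>)))) \<partial>lborel)"
    proof (rule Bochner_Integration.integral_cong)
      fix x :: "real^'n"
      have "cis (- 2 * pi * (y \<bullet> x)) * ?E x = cis (- 2 * pi * (x \<bullet> (y + \<xi>)))"
        unfolding cis_mult by (simp add: inner_add_right inner_commute algebra_simps)
      thus "a x * b y * (cis (- 2 * pi * (y \<bullet> x)) * ?E x) = b y * (a x * cis (- 2 * pi * (x \<bullet> (y + \<xi>))))"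
        by (simp add: mult_ac)
    qed simp
    also have "\<dots> = b y * fourier a (y + \<xi>)" by (simp add: fourier_lborel)
    finally show ?thesis .
  qed
  have "fourier (\<lambda>x. a x * fourier b x) \<xi> = (\<integral>x. (a x * (\<integral>y. b y * cis (- 2 * pi * (y \<bullet> x)) \<partial>lborel)) * ?E x \<partial>lborel)"
    by (simp add: fourier_lborel)
  also have "\<dots> = (\<integral>x. (\<integral>y. a x * b y * (cis (- 2 * pi * (y \<bullet> x)) * ?E x) \<partial>lborel) \<partial>lborel)"
  proof (rule Bochner_Integration.integral_cong[OF refl])
    fix x :: "real^'n"
    have "(\<integral>y. a x * b y * (cis (- 2 * pi * (y \<bullet> x)) * ?E x) \<partial>lborel) = (\<integral>y. (a x * ?E x) * (b y * cis (- 2 * pi * (y \<bullet> x))) \<partial>lborel)"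
      by (rule Bochner_Integration.integral_cong) (simp_all add: mult_ac)
    also have "\<dots> = (a x * ?E x) * (\<integral>y. b y * cis (- 2 * pi * (y \<bullet> x)) \<partial>lborel)"
      by (rule integral_mult_right_zero)
    finally show "(a x * (\<integral>y. b y * cis (- 2 * pi * (y \<bullet> x)) \<partial>lborel)) * ?E x = (\<integral>y. a x * b y * (cis (- 2 * pi * (y \<bullet> x)) * ?E x) \<partial>lborel)"
      by (metis (no_types) mult.assoc mult.commute)
  qed
  also have "\<dots> = (\<integral>y. (\<integral>x. a x * b y * (cis (- 2 * pi * (y \<bullet> x)) * ?E x) \<partial>lborel) \<partial>lborel)"
    using lborel_pair.Fubini_integral[of "\<lambda>x y. a x * b y * (cis (- 2 * pi * (y \<bullet> x)) * ?E x)"] I by simp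
  also have "\<dots> = (\<integral>y. b y * fourier a (y + \<xi>) \<partial>lborel)" by (simp only: inner)
  finally show ?thesis .
qed

lemma fourier_mult_fourier:
  fixes a b :: "real^'n::finite \<Rightarrow> complex"
  assumes a: "integrable lborel a" and [measurable]: "a \<in> borel_measurable borel"
    and b: "integrable lborel b" and [measurable]: "b \<in> borel_measurable borel"
    and even: "\<And>x. b (- x) = b x"
  shows "fourier (\<lambda>x. a x * fourier b x) \<xi> = conv (fourier a) b \<xi>"
proof -
  have [measurable]: "fourier a \<in> borel_measurable borel" by (rule borel_measurable_fourier[OF a]) simp
  have "fourier (\<lambda>x. a x * fourier b x) \<xi> = (\<integral>y. b y * fourier a (y + \<xi>) \<partial>lborel)"
    by (rule fourier_mult_fourier_eq_integral[OF a _ b]) simp_all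
  also have "\<dots> = (\<integral>y. b (- y) * fourier a (- y + \<xi>) \<partial>lborel)"
    by (rule lborel_reflection_invariant(1)[symmetric]) measurable
  also have "\<dots> = (\<integral>y. (\<lambda>w. fourier a w * b (\<xi> - w)) (\<xi> - y) \<partial>lborel)"
    by (simp add: even mult.commute)
  also have "\<dots> = (\<integral>w. fourier a w * b (\<xi> - w) \<partial>lborel)"
    by (rule lborel_flip_invariant(1)) measurable
  also have "\<dots> = conv (fourier a) b \<xi>" by (simp add: conv_lborel)
  finally show ?thesis .
qed

section \<open>Rapid decay\<close>

definition rapidly_decreasing :: "('i \<Rightarrow> real^'n::finite \<Rightarrow> 'b::real_normed_vector) \<Rightarrow> bool" where
  "rapidly_decreasing D \<longleftrightarrow> (\<forall>\<alpha> (k::nat). \<exists>C. \<forall>x. (1 + norm x) ^ k * norm (D \<alpha> x) \<le> C)"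

lemma schwartzI: "partials_family f D \<Longrightarrow> rapidly_decreasing D \<Longrightarrow> schwartz f"
  unfolding schwartz_def rapidly_decreasing_def by blast

lemma rapidly_decreasing_add:
  assumes A: "rapidly_decreasing Da" and B: "rapidly_decreasing Db"
  shows "rapidly_decreasing (\<lambda>\<alpha> x. Da \<alpha> x + Db \<alpha> x)"
  unfolding rapidly_decreasing_def
proof (intro allI)
  fix \<alpha> k
  obtain C1 where C1: "\<And>x. (1 + norm x) ^ k * norm (Da \<alpha> x) \<le> C1"
    using A unfolding rapidly_decreasing_def by blast
  obtain C2 where C2: "\<And>x. (1 + norm x) ^ k * norm (Db \<alpha> x) \<le> C2"
    using B unfolding rapidly_decreasing_def by blast
  have "(1 + norm x) ^ k * norm (Da \<alpha> x + Db \<alpha> x) \<le> C1 + C2" for x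
  proof -
    have "(1 + norm x) ^ k * norm (Da \<alpha> x + Db \<alpha> x)
        \<le> (1 + norm x) ^ k * norm (Da \<alpha> x) + (1 + norm x) ^ k * norm (Db \<alpha> x)"
      by (simp add: distrib_left[symmetric] mult_left_mono norm_triangle_ineq)
    thus ?thesis using C1[of x] C2[of x] by linarith
  qed
  thus "\<exists>C. \<forall>x. (1 + norm x) ^ k * norm (Da \<alpha> x + Db \<alpha> x) \<le> C" by blast
qed

lemma norm_sum_list_le: "norm (sum_list (map A xs)) \<le> sum_list (map (\<lambda>p. norm (A p)) xs)"
  by (induction xs) (auto intro: order_trans[OF norm_triangle_ineq])

lemma rapidly_decreasing_leibniz_family:
  fixes Da Db :: "'i list \<Rightarrow> real^'n::finite \<Rightarrow> 'b::real_normed_algebra"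
  assumes A: "\<And>\<beta> x. norm (Da \<beta> x) \<le> Bf \<beta>" and B: "rapidly_decreasing Db"
  shows "rapidly_decreasing (leibniz_family Da Db)"
  unfolding rapidly_decreasing_def
proof (intro allI)
  fix \<alpha> k
  have "\<forall>\<beta>. \<exists>C. \<forall>x. (1 + norm x) ^ k * norm (Db \<beta> x) \<le> C"
    using B unfolding rapidly_decreasing_def by blast
  then obtain C where C: "\<And>\<beta> x. (1 + norm x) ^ k * norm (Db \<beta> x) \<le> C \<beta>"
    by metis
  have "(1 + norm x) ^ k * norm (leibniz_family Da Db \<alpha> x) \<le> sum_list (map (\<lambda>(p,q). Bf p * C q) (splits \<alpha>))"
    for x
  proof -
    have "(1 + norm x) ^ k * norm (leibniz_family Da Db \<alpha> x)
        \<le> (1 + norm x) ^ k * sum_list (map (\<lambda>(p,q). norm (Da p x * Db q x)) (splits \<alpha>))"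
      unfolding leibniz_family_def
      by (rule mult_left_mono) (use norm_sum_list_le in \<open>simp_all add: case_prod_beta'\<close>)
    also have "\<dots> = sum_list (map (\<lambda>(p,q). (1 + norm x) ^ k * norm (Da p x * Db q x)) (splits \<alpha>))"
      by (simp add: sum_list_const_mult case_prod_beta' o_def)
    also have "\<dots> \<le> sum_list (map (\<lambda>(p,q). Bf p * C q) (splits \<alpha>))"
    proof (rule sum_list_mono, clarify)
      fix p q
      have "(1 + norm x) ^ k * norm (Da p x * Db q x) \<le> norm (Da p x) * ((1 + norm x) ^ k * norm (Db q x))"
        using mult_left_mono[OF norm_mult_ineq, of "(1 + norm x) ^ k" "Da p x" "Db q x"]
        by (simp add: mult_ac)
      also have "\<dots> \<le> Bf p * C q"
        using A[of p x] C[of x q] by (intro mult_mono) (auto intro: order_trans[OF norm_ge_zero])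
      finally show "(1 + norm x) ^ k * norm (Da p x * Db q x) \<le> Bf p * C q" .
    qed
    finally show ?thesis .
  qed
  thus "\<exists>C. \<forall>x. (1 + norm x) ^ k * norm (leibniz_family Da Db \<alpha> x) \<le> C" by blast
qed

lemma one_plus_norm_le_mult:
  fixes x y :: "'a::real_normed_vector"
  assumes "norm (x - y) \<le> R" "0 \<le> R"
  shows "1 + norm x \<le> (1 + R) * (1 + norm y)"
proof -
  have "0 \<le> R * norm y" using assms(2) by simp
  thus ?thesis using assms(1) norm_triangle_ineq2[of x y] by (simp add: algebra_simps)
qed

lemma conv_decay:
  fixes a b :: "real^'n::finite \<Rightarrow> complex"
  assumes a: "integrable lborel a" and [measurable]: "a \<in> borel_measurable borel"
    and A: "\<And>y. (1 + norm y) ^ k * norm (a y) \<le> A"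
    and b: "continuous_on UNIV b" and R: "0 \<le> R" and zb: "\<And>x. R < norm x \<Longrightarrow> b x = 0"
  shows "(1 + norm x) ^ k * norm (conv a b x) \<le> (1 + R) ^ k * A * (\<integral>y. norm (b y) \<partial>lborel)"
proof -
  have [measurable]: "b \<in> borel_measurable borel" by (rule borel_measurable_continuous_onI[OF b])
  have bi: "integrable lborel b" by (rule continuous_vanishing_outside_integrable[OF b zb])
  obtain B where B: "\<And>x. norm (b x) \<le> B" using continuous_vanishing_outside_bounded[OF b zb] by blast
  let ?K = "(1 + R) ^ k * A"
  have ib: "integrable lborel (\<lambda>y. ?K * norm (b (x - y)))"
    using lborel_flip_invariant(2)[of "\<lambda>y. norm (b y)" x] bi by simp
  have ii: "integrable lborel (\<lambda>y. a y * b (x - y))"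
    by (rule integrable_mult_bounded[OF a _ B]) measurable
  have "(1 + norm x) ^ k * norm (conv a b x) = norm (\<integral>y. (1 + norm x) ^ k *\<^sub>R (a y * b (x - y)) \<partial>lborel)"
    by (simp add: conv_lborel)
  also have "\<dots> \<le> (\<integral>y. ?K * norm (b (x - y)) \<partial>lborel)"
  proof (rule Bochner_Integration.integral_norm_bound_integral[OF _ ib])
    show "integrable lborel (\<lambda>y. (1 + norm x) ^ k *\<^sub>R (a y * b (x - y)))" using ii by simp
    fix y :: "real^'n"
    show "norm ((1 + norm x) ^ k *\<^sub>R (a y * b (x - y))) \<le> ?K * norm (b (x - y))"
    proof (cases "b (x - y) = 0")
      case False
      hence "norm (x - y) \<le> R" using zb by force
      hence "1 + norm x \<le> (1 + R) * (1 + norm y)" by (rule one_plus_norm_le_mult[OF _ R])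
      hence "(1 + norm x) ^ k \<le> ((1 + R) * (1 + norm y)) ^ k"
        by (rule power_mono) (use norm_ge_zero[of x] in linarith)
      hence "(1 + norm x) ^ k * norm (a y) \<le> (1 + R) ^ k * ((1 + norm y) ^ k * norm (a y))"
        unfolding mult.assoc[symmetric] power_mult_distrib[symmetric] by (rule mult_right_mono) simp
      also have "\<dots> \<le> ?K" using A[of y] R by (intro mult_left_mono) auto
      finally show ?thesis by (simp add: norm_mult mult_right_mono mult.assoc[symmetric])
    qed simp
  qed
  also have "\<dots> = ?K * (\<integral>y. norm (b y) \<partial>lborel)"
    using lborel_flip_invariant(1)[of "\<lambda>y. norm (b y)" x] by simp
  finally show ?thesis .
qed

lemma rapidly_decreasing_conv:
  fixes a :: "real^'n::finite \<Rightarrow> complex"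
  assumes a: "integrable lborel a" and [measurable]: "a \<in> borel_measurable borel"
    and A: "\<And>k. \<exists>A. \<forall>y. (1 + norm y) ^ k * norm (a y) \<le> A"
    and cD: "\<And>\<alpha>. continuous_on UNIV (D \<alpha>)" and zD: "\<And>\<alpha> x. R < norm x \<Longrightarrow> D \<alpha> x = 0"
  shows "rapidly_decreasing (\<lambda>\<alpha>. conv a (D \<alpha>))"
  unfolding rapidly_decreasing_def
proof (intro allI)
  fix \<alpha> k
  obtain Ak where "\<And>y. (1 + norm y) ^ k * norm (a y) \<le> Ak" using A by blast
  from conv_decay[OF a _ this cD, of "max R 0"] zD
  show "\<exists>C. \<forall>x. (1 + norm x) ^ k * norm (conv a (D \<alpha>) x) \<le> C" by fastforce
qed

lemma rad_nonneg_beyond: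
  assumes "eventually_nonneg f" "rad f < norm y"
  shows "0 \<le> f y"
proof -
  let ?S = "{r. r > 0 \<and> (\<forall>x. norm x \<ge> r \<longrightarrow> f x \<ge> 0)}"
  obtain R where R: "\<And>x. norm x \<ge> R \<Longrightarrow> f x \<ge> 0" using assms(1) unfolding eventually_nonneg_def by blast
  have "max R 1 \<in> ?S" using R by auto
  moreover have "bdd_below ?S" by (rule bdd_belowI[of _ 0]) auto
  ultimately obtain r where "r \<in> ?S" "r < norm y"
    using assms(2) cInf_less_iff[of ?S "norm y"] unfolding rad_def by blast
  thus "0 \<le> f y" by auto
qed

lemma rad_le:
  assumes "0 < r" "\<And>x. r \<le> norm x \<Longrightarrow> 0 \<le> f x"
  shows "rad f \<le> r"
  unfolding rad_def by (rule cInf_lower) (use assms in \<open>auto intro: bdd_belowI[of _ 0]\<close>)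

lemma rad_nonneg:
  assumes "eventually_nonneg f"
  shows "0 \<le> rad f"
proof -
  obtain R where R: "\<And>x. norm x \<ge> R \<Longrightarrow> f x \<ge> 0" using assms unfolding eventually_nonneg_def by blast
  hence "max R 1 \<in> {r. r > 0 \<and> (\<forall>x. norm x \<ge> r \<longrightarrow> f x \<ge> 0)}" by auto
  thus ?thesis unfolding rad_def by (intro cInf_greatest) auto
qed

lemma A_tildeD:
  fixes f :: "real^'n::finite \<Rightarrow> real"
  assumes fA: "f \<in> A_tilde"
  shows "continuous_on UNIV f" "integrable lborel f" "f \<in> borel_measurable borel"
    "\<And>\<xi>. fourier (\<lambda>x. complex_of_real (f x)) \<xi> = complex_of_real (f \<xi>)" "f 0 < 0"
    "\<And>x. \<bar>f x\<bar> \<le> (\<integral>x. \<bar>f x\<bar> \<partial>lborel)" "eventually_nonneg f"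
proof -
  have il: "integrable lebesgue f"
    and fF: "\<And>\<xi>. fourier (\<lambda>x. complex_of_real (f x)) \<xi> = complex_of_real (f \<xi>)"
    using fA unfolding A_tilde_def A_plus_def by auto
  show "\<And>\<xi>. fourier (\<lambda>x. complex_of_real (f x)) \<xi> = complex_of_real (f \<xi>)" by (rule fF)
  show "f 0 < 0" "eventually_nonneg f" using fA unfolding A_tilde_def A_plus_def by auto
  have "continuous_on UNIV (fourier (\<lambda>x. complex_of_real (f x)))"
    by (rule fourier_continuous) (use il in simp)
  hence "continuous_on UNIV (\<lambda>\<xi>. Re (fourier (\<lambda>x. complex_of_real (f x)) \<xi>))" by (intro continuous_intros)
  thus "continuous_on UNIV f" by (simp add: fF)
  thus b[measurable]: "f \<in> borel_measurable borel" by (rule borel_measurable_continuous_onI)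
  show il2: "integrable lborel f" using il lebesgue_integral_eq_lborel(2)[OF b] by simp
  show "\<bar>f x\<bar> \<le> (\<integral>x. \<bar>f x\<bar> \<partial>lborel)" for x
    using norm_fourier_le[of "\<lambda>x. complex_of_real (f x)" x] il2 by (simp add: fF)
qed

section \<open>The smoothing kernel\<close>

locale bump =
  fixes ps :: "real^'n::finite \<Rightarrow> real" and d :: real
  assumes d: "d > 0" and nn: "\<And>x. ps x \<ge> 0" and ev: "\<And>x. ps (- x) = ps x"
    and sm: "smooth_fun ps" and supp: "\<And>x. ps x \<noteq> 0 \<Longrightarrow> norm x < d"
    and L1: "(\<integral>x. \<bar>ps x\<bar> \<partial>lebesgue) = 1"
begin

definition "psc = (\<lambda>x. complex_of_real (ps x))"
definition "phi = conv psc psc"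
definition "phir = (\<lambda>x. \<integral>y. ps y * ps (x - y) \<partial>lborel)"

lemma ps_continuous: "continuous_on UNIV ps"
proof -
  obtain D where "partials_family ps D" using sm unfolding smooth_fun_def by blast
  thus ?thesis using partials_family_continuous[of ps D "[]"] by (simp add: partials_family_def)
qed

lemma ps_borel[measurable]: "ps \<in> borel_measurable borel"
  by (rule borel_measurable_continuous_onI[OF ps_continuous])

lemma ps_zero: "d \<le> norm x \<Longrightarrow> ps x = 0"
  using supp by force

lemma ps_int: "integrable lborel ps"
  by (rule continuous_vanishing_outside_integrable[OF ps_continuous, of d]) (use ps_zero in auto)

lemma ps_one: "(\<integral>x. ps x \<partial>lborel) = 1"
  using L1 nn lebesgue_integral_eq_lborel(1)[OF ps_borel] by simp

lemma psc_test_function: "test_function psc"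
proof -
  obtain D where "partials_family ps D" using sm unfolding smooth_fun_def by blast
  hence "partials_family psc (\<lambda>\<alpha> x. complex_of_real (D \<alpha> x))"
    unfolding psc_def by (rule partials_family_of_real)
  moreover have "\<forall>x. d \<le> norm x \<longrightarrow> psc x = 0" using ps_zero by (simp add: psc_def)
  ultimately show ?thesis unfolding test_function_def smooth_fun_def by blast
qed

lemma psc_borel[measurable]: "psc \<in> borel_measurable borel" unfolding psc_def by measurable
lemma psc_int: "integrable lborel psc" unfolding psc_def using ps_int by simp

lemma phi_eq: "phi x = complex_of_real (phir x)"
  unfolding phi_def phir_def by (simp add: conv_lborel psc_def of_real_mult[symmetric] del: of_real_mult)

lemma phir_nonneg: "phir x \<ge> 0"
  unfolding phir_def by (rule integral_nonneg_AE) (simp add: nn)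

lemma phir_supp: "phir x \<noteq> 0 \<Longrightarrow> norm x < 2 * d"
proof (rule ccontr)
  assume "phir x \<noteq> 0" "\<not> norm x < 2 * d"
  have "ps y * ps (x - y) = 0" for y
  proof (cases "norm y < d")
    case True
    hence "d \<le> norm (x - y)" using \<open>\<not> norm x < 2 * d\<close> norm_triangle_ineq2[of x y] by simp
    thus ?thesis using ps_zero by simp
  qed (simp add: ps_zero)
  hence "(\<lambda>y. ps y * ps (x - y)) = (\<lambda>y. 0)" by auto
  hence "phir x = 0" by (simp add: phir_def)
  with \<open>phir x \<noteq> 0\<close> show False by simp
qed

lemma phir_even: "phir (- x) = phir x"
proof -
  have "phir (- x) = (\<integral>y. ps (- y) * ps (- x - (- y)) \<partial>lborel)"
    unfolding phir_def by (rule lborel_reflection_invariant(1)[symmetric]) measurable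
  also have "\<dots> = phir x" unfolding phir_def
    by (rule Bochner_Integration.integral_cong) (auto simp: ev[of "x - _", symmetric] ev)
  finally show ?thesis .
qed

lemma phi_even: "phi (- x) = phi x" by (simp add: phi_eq phir_even)

lemma phi_test_function: "test_function phi"
proof -
  obtain D R Bf where pf: "partials_family psc D" and cD: "\<And>\<alpha>. continuous_on UNIV (D \<alpha>)"
    and zD: "\<And>\<alpha> x. R < norm x \<Longrightarrow> D \<alpha> x = 0" and B: "\<And>\<beta> x. norm (D \<beta> x) \<le> Bf \<beta>"
    using test_functionE[OF psc_test_function] by metis
  have "partials_family phi (\<lambda>\<alpha>. conv psc (D \<alpha>))"
    unfolding phi_def by (rule partials_family_conv[OF psc_int psc_borel pf cD B])
  moreover have "\<forall>x. 2 * d \<le> norm x \<longrightarrow> phi x = 0" using phir_supp by (force simp: phi_eq)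
  ultimately show ?thesis unfolding test_function_def smooth_fun_def by blast
qed

lemma phi_int: "integrable lborel phi"
  by (rule compact_cont_integrable[OF test_function_compact_cont[OF phi_test_function]])
lemma phi_borel[measurable]: "phi \<in> borel_measurable borel"
  by (rule compact_cont_borel[OF test_function_compact_cont[OF phi_test_function]])

lemma phir_int: "integrable lborel phir"
proof -
  have "integrable lborel (\<lambda>x. Re (phi x))" using phi_int by auto
  thus ?thesis by (simp add: phi_eq)
qed

lemma phir_borel[measurable]: "phir \<in> borel_measurable borel"
proof -
  have "(\<lambda>x. Re (phi x)) \<in> borel_measurable borel" by measurable
  thus ?thesis by (simp add: phi_eq)
qed

definition "ps_hat \<xi> = (\<integral>x. ps x * cos (2 * pi * (x \<bullet> \<xi>)) \<partial>lborel)"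

lemma fourier_psc: "fourier psc \<xi> = complex_of_real (ps_hat \<xi>)"
proof -
  let ?I = "fourier psc \<xi>"
  have I1: "?I = (\<integral>x. complex_of_real (ps x) * cis (- 2 * pi * (x \<bullet> \<xi>)) \<partial>lborel)"
    by (simp add: fourier_lborel psc_def)
  have I2: "?I = (\<integral>x. complex_of_real (ps x) * cis (2 * pi * (x \<bullet> \<xi>)) \<partial>lborel)"
  proof -
    have "?I = (\<integral>x. complex_of_real (ps (- x)) * cis (- 2 * pi * ((- x) \<bullet> \<xi>)) \<partial>lborel)"
      unfolding I1 by (rule lborel_reflection_invariant(1)[symmetric]) measurable
    thus ?thesis by (simp add: ev)
  qed
  have int1: "integrable lborel (\<lambda>x. complex_of_real (ps x) * cis (s * (x \<bullet> \<xi>)))" for s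
    by (rule integrable_mult_bounded[where B=1]) (auto simp: psc_int[unfolded psc_def])
  have "2 * ?I = (\<integral>x. complex_of_real (ps x) * cis (- 2 * pi * (x \<bullet> \<xi>)) + complex_of_real (ps x) * cis (2 * pi * (x \<bullet> \<xi>)) \<partial>lborel)"
    using int1[of "- 2 * pi"] int1[of "2 * pi"] I1 I2
    by (simp add: Bochner_Integration.integral_add)
  also have "\<dots> = (\<integral>x. complex_of_real (2 * (ps x * cos (2 * pi * (x \<bullet> \<xi>)))) \<partial>lborel)"
    by (rule Bochner_Integration.integral_cong) (auto simp: cis.ctr complex_eq_iff)
  also have "\<dots> = 2 * complex_of_real (ps_hat \<xi>)" unfolding ps_hat_def integral_complex_of_real by simp
  finally show ?thesis by simp
qed

lemma fourier_phi: "fourier phi \<xi> = complex_of_real (ps_hat \<xi> ^ 2)"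
  unfolding phi_def fourier_conv[OF psc_int psc_borel psc_int psc_borel]
  by (simp add: fourier_psc power2_eq_square)

lemma phir_one: "(\<integral>x. phir x \<partial>lborel) = 1"
proof -
  have "fourier phi 0 = complex_of_real (\<integral>x. phir x \<partial>lborel)"
    by (simp add: fourier_lborel phi_eq)
  moreover have "fourier psc 0 = 1" by (simp add: fourier_lborel psc_def ps_one)
  ultimately show ?thesis using fourier_phi[of 0] fourier_psc[of 0] by simp
qed

lemma fourier_phi_bound: "norm (fourier phi y - 1) \<le> 4 * pi * d * norm y"
proof -
  have "fourier phi y - 1 = (\<integral>x. complex_of_real (phir x) * (cis (- 2 * pi * (x \<bullet> y)) - 1) \<partial>lborel)"
  proof -
    have i1: "integrable lborel (\<lambda>x. complex_of_real (phir x) * cis (- 2 * pi * (x \<bullet> y)))"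
      by (rule integrable_mult_bounded[where B=1]) (auto simp: phir_int)
    have "fourier phi y - 1 = (\<integral>x. complex_of_real (phir x) * cis (- 2 * pi * (x \<bullet> y)) \<partial>lborel) - (\<integral>x. complex_of_real (phir x) \<partial>lborel)"
      by (simp add: fourier_lborel phi_eq phir_one)
    also have "\<dots> = (\<integral>x. complex_of_real (phir x) * cis (- 2 * pi * (x \<bullet> y)) - complex_of_real (phir x) \<partial>lborel)"
      using i1 phir_int by (simp add: Bochner_Integration.integral_diff)
    finally show ?thesis by (simp add: algebra_simps)
  qed
  also have "norm \<dots> \<le> (\<integral>x. phir x * (4 * pi * d * norm y) \<partial>lborel)"
  proof (rule Bochner_Integration.integral_norm_bound_integral)
    show "integrable lborel (\<lambda>x. complex_of_real (phir x) * (cis (- 2 * pi * (x \<bullet> y)) - 1))"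
      by (rule integrable_mult_bounded[where B=2]) (auto simp: phir_int intro: order_trans[OF norm_triangle_ineq4])
    show "integrable lborel (\<lambda>x. phir x * (4 * pi * d * norm y))" using phir_int by simp
    fix x :: "real^'n"
    show "norm (complex_of_real (phir x) * (cis (- 2 * pi * (x \<bullet> y)) - 1)) \<le> phir x * (4 * pi * d * norm y)"
    proof (cases "phir x = 0")
      case False
      hence nx: "norm x < 2 * d" by (rule phir_supp)
      have "norm (cis (- 2 * pi * (x \<bullet> y)) - 1) \<le> \<bar>- 2 * pi * (x \<bullet> y)\<bar>" by (rule norm_cis_minus_one_le)
      also have "\<dots> = 2 * pi * \<bar>x \<bullet> y\<bar>" by (simp add: abs_mult)
      also have "\<dots> \<le> 2 * pi * (norm x * norm y)" by (simp add: Cauchy_Schwarz_ineq2)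
      also have "\<dots> \<le> 2 * pi * (2 * d * norm y)"
        using mult_right_mono[OF less_imp_le[OF nx] norm_ge_zero[of y]] by simp
      finally have "norm (cis (- 2 * pi * (x \<bullet> y)) - 1) \<le> 4 * pi * d * norm y" by simp
      hence "phir x * norm (cis (- 2 * pi * (x \<bullet> y)) - 1) \<le> phir x * (4 * pi * d * norm y)"
        by (rule mult_left_mono) (rule phir_nonneg)
      thus ?thesis using phir_nonneg[of x] by (simp add: norm_mult)
    qed simp
  qed
  also have "\<dots> = 4 * pi * d * norm y" by (simp add: phir_one)
  finally show ?thesis .
qed

lemma ps_hat_zero: "ps_hat 0 = 1"
  unfolding ps_hat_def by (simp add: ps_one)

lemma ps_hat_bound: "\<bar>ps_hat y\<bar> \<le> 1"
proof -
  have "norm (fourier psc y) \<le> (\<integral>x. norm (psc x) \<partial>lborel)" by (rule norm_fourier_le[OF psc_borel])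
  also have "\<dots> = 1" using ps_one nn by (simp add: psc_def)
  finally show ?thesis by (simp add: fourier_psc)
qed

lemma ps_hat_borel[measurable]: "ps_hat \<in> borel_measurable borel"
proof -
  have "(\<lambda>y. Re (fourier psc y)) \<in> borel_measurable borel"
    using borel_measurable_fourier[OF psc_int psc_borel] by measurable
  thus ?thesis by (simp add: fourier_psc)
qed

lemma phir_bounded: "\<exists>B. \<forall>x. \<bar>phir x\<bar> \<le> B"
proof -
  obtain B where "\<forall>x. norm (phi x) \<le> B"
    using continuous_vanishing_outside_bounded test_function_compact_cont[OF phi_test_function]
    unfolding compact_cont_def by metis
  thus ?thesis by (auto simp: phi_eq)
qed

lemma phir_average_le:
  assumes G: "\<And>y. norm y < 2 * d \<Longrightarrow> G y \<le> c" and i: "integrable lborel (\<lambda>y. G y * phir (- y))"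
  shows "(\<integral>y. G y * phir (- y) \<partial>lborel) \<le> c"
proof -
  have "(\<integral>y. G y * phir (- y) \<partial>lborel) \<le> (\<integral>y. c * phir (- y) \<partial>lborel)"
  proof (rule integral_mono[OF i])
    show "integrable lborel (\<lambda>y. c * phir (- y))"
      using lborel_reflection_invariant(2)[OF phir_borel] phir_int by simp
    fix y :: "real^'n"
    show "G y * phir (- y) \<le> c * phir (- y)"
    proof (cases "phir (- y) = 0")
      case False
      hence "norm (- y) < 2 * d" by (rule phir_supp)
      hence "G y \<le> c" using G by simp
      thus ?thesis by (rule mult_right_mono) (rule phir_nonneg)
    qed simp
  qed
  also have "\<dots> = c" using lborel_reflection_invariant(1)[OF phir_borel] phir_one by simp
  finally show ?thesis .
qed

lemma ps_hat_sq_near_one: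
  assumes "d \<le> 1/20" "norm y < 2 * d"
  shows "\<bar>ps_hat y ^ 2 - 1\<bar> \<le> 2/25"
proof -
  have "fourier phi y - 1 = complex_of_real (ps_hat y ^ 2 - 1)" by (simp add: fourier_phi)
  hence "\<bar>ps_hat y ^ 2 - 1\<bar> \<le> 4 * pi * d * norm y"
    using fourier_phi_bound[of y] by (simp only: norm_of_real)
  also have "\<dots> \<le> 4 * pi * d * (2 * d)" using assms d by (intro mult_left_mono) auto
  also have "\<dots> \<le> 4 * 4 * (1/20) * (2 * (1/20))"
    using assms d pi_less_4 by (intro mult_mono) auto
  finally show ?thesis by simp
qed

end

locale smoothing = bump ps d for ps :: "real^'n::finite \<Rightarrow> real" and d +
  fixes f :: "real^'n \<Rightarrow> real"
  assumes fA: "f \<in> A_tilde"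
begin

definition "F = (\<lambda>x. complex_of_real (f x))"
definition "g = conv F phi"
definition "h = (\<lambda>x. conv (fourier g) phi x + g x * fourier phi x)"

lemma f_borel[measurable]: "f \<in> borel_measurable borel" using A_tildeD(3)[OF fA] .
lemma f_int: "integrable lborel f" using A_tildeD(2)[OF fA] .
lemma F_borel[measurable]: "F \<in> borel_measurable borel" unfolding F_def by measurable
lemma F_int: "integrable lborel F" unfolding F_def using f_int by simp
lemma fourier_F: "fourier F = F" using A_tildeD(4)[OF fA] by (auto simp: F_def)

lemma F_bound: "norm (F x) \<le> (\<integral>x. \<bar>f x\<bar> \<partial>lborel)"
  unfolding F_def using A_tildeD(6)[OF fA] by simp

lemma fourier_phi_borel[measurable]: "fourier phi \<in> borel_measurable borel"
  by (rule borel_measurable_fourier[OF phi_int phi_borel])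

lemma norm_fourier_phi_le: "norm (fourier phi x) \<le> 1"
  using ps_hat_bound[of x] by (simp only: fourier_phi norm_of_real) (simp add: abs_square_le_1)

lemma g_int: "integrable lborel g" and g_borel[measurable]: "g \<in> borel_measurable borel"
  unfolding g_def by (rule integrable_conv[OF F_int F_borel phi_int phi_borel])+

lemma fourier_g: "fourier g = (\<lambda>\<xi>. F \<xi> * fourier phi \<xi>)"
  unfolding g_def fourier_conv[OF F_int F_borel phi_int phi_borel] by (simp add: fourier_F)

lemma fourier_g_int: "integrable lborel (fourier g)"
  unfolding fourier_g by (rule integrable_mult_bounded[OF F_int _ norm_fourier_phi_le]) simp

lemma fourier_g_borel[measurable]: "fourier g \<in> borel_measurable borel"
  unfolding fourier_g by measurable

lemma h_real:
  "h x = complex_of_real ((\<integral>y. f y * ps_hat y ^ 2 * phir (x - y) \<partial>lborel)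
           + (\<integral>y. f y * phir (x - y) \<partial>lborel) * ps_hat x ^ 2)"
proof -
  have "conv (fourier g) phi x = complex_of_real (\<integral>y. f y * ps_hat y ^ 2 * phir (x - y) \<partial>lborel)"
    by (simp add: conv_lborel fourier_g F_def fourier_phi phi_eq
        of_real_mult[symmetric] of_real_power[symmetric] del: of_real_mult of_real_power)
  moreover have "g x = complex_of_real (\<integral>y. f y * phir (x - y) \<partial>lborel)"
    by (simp add: g_def conv_lborel F_def phi_eq of_real_mult[symmetric] del: of_real_mult)
  ultimately show ?thesis by (simp add: h_def fourier_phi)
qed

lemma Im_h: "Im (h x) = 0" by (simp add: h_real)

lemma fourier_h: "fourier h = h"
proof
  fix \<xi>
  have "fourier (fourier g) \<xi> = g \<xi>"
    unfolding fourier_g fourier_mult_fourier[OF F_int F_borel phi_int phi_borel phi_even]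
    by (simp add: fourier_F g_def)
  moreover have "fourier (\<lambda>x. g x * fourier phi x) \<xi> = conv (fourier g) phi \<xi>"
    by (rule fourier_mult_fourier[OF g_int g_borel phi_int phi_borel phi_even])
  moreover have "integrable lborel (\<lambda>x. g x * fourier phi x)"
    by (rule integrable_mult_bounded[OF g_int _ norm_fourier_phi_le]) simp
  ultimately show "fourier h \<xi> = h \<xi>"
    unfolding h_def
    by (simp add: fourier_add integrable_conv[OF fourier_g_int fourier_g_borel phi_int phi_borel]
        fourier_conv[OF fourier_g_int fourier_g_borel phi_int phi_borel])
qed

lemma fourier_g_decay: "\<exists>A. \<forall>y. (1 + norm y) ^ k * norm (fourier g y) \<le> A"
proof -
  obtain C where C: "\<And>y. (1 + norm y) ^ k * norm (fourier phi y) \<le> C"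
    using fourier_test_function_decay[OF phi_test_function] by blast
  have "(1 + norm y) ^ k * norm (fourier g y) \<le> (\<integral>x. \<bar>f x\<bar> \<partial>lborel) * C" for y
  proof -
    have "(1 + norm y) ^ k * norm (fourier g y) = norm (F y) * ((1 + norm y) ^ k * norm (fourier phi y))"
      by (simp add: fourier_g norm_mult mult_ac)
    also have "\<dots> \<le> (\<integral>x. \<bar>f x\<bar> \<partial>lborel) * C"
      using C[of y] F_bound[of y] by (intro mult_mono) auto
    finally show ?thesis .
  qed
  thus ?thesis by blast
qed

lemma schwartz_h: "schwartz h"
proof -
  obtain D R Bf where pf: "partials_family phi D" and cD: "\<And>\<alpha>. continuous_on UNIV (D \<alpha>)"
    and zD: "\<And>\<alpha> x. R < norm x \<Longrightarrow> D \<alpha> x = 0" and B: "\<And>\<beta> x. norm (D \<beta> x) \<le> Bf \<beta>"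
    using test_functionE[OF phi_test_function] by metis
  have D_borel: "D \<alpha> \<in> borel_measurable borel" for \<alpha> by (rule borel_measurable_continuous_onI[OF cD])
  let ?D1 = "\<lambda>\<alpha>. conv (fourier g) (D \<alpha>)"
  let ?Dg = "\<lambda>\<alpha>. conv F (D \<alpha>)"
  let ?Dp = "\<lambda>\<beta>. fourier (coord_monomial_mult \<beta> phi)"
  have "partials_family g ?Dg"
    unfolding g_def by (rule partials_family_conv[OF F_int F_borel pf cD B])
  hence pfh: "partials_family h (\<lambda>\<alpha> x. ?D1 \<alpha> x + leibniz_family ?Dg ?Dp \<alpha> x)"
    unfolding h_def
    by (intro partials_family_add partials_family_mult partials_family_conv[OF fourier_g_int fourier_g_borel pf cD B]
        fourier_test_function_partials[OF phi_test_function])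
  have "rapidly_decreasing (\<lambda>\<alpha> x. ?D1 \<alpha> x + leibniz_family ?Dg ?Dp \<alpha> x)"
  proof (rule rapidly_decreasing_add)
    show "rapidly_decreasing ?D1"
      by (rule rapidly_decreasing_conv[OF fourier_g_int fourier_g_borel fourier_g_decay cD zD])
    show "rapidly_decreasing (leibniz_family ?Dg ?Dp)"
    proof (rule rapidly_decreasing_leibniz_family)
      show "norm (?Dg \<beta> x) \<le> (\<integral>y. norm (F y) \<partial>lborel) * Bf \<beta>" for \<beta> x
        by (rule norm_conv_le[OF F_int F_borel D_borel B])
      show "rapidly_decreasing ?Dp"
        unfolding rapidly_decreasing_def
        using fourier_test_function_partials_decay[OF phi_test_function] by blast
    qed
  qed
  from schwartzI[OF pfh this] show ?thesis .
qed

lemma Re_h_zero_le: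
  assumes c1: "\<And>y. norm y < 2 * d \<Longrightarrow> f y * ps_hat y ^ 2 \<le> c1"
    and c2: "\<And>y. norm y < 2 * d \<Longrightarrow> f y \<le> c2"
  shows "Re (h 0) \<le> c1 + c2"
proof -
  obtain B where B: "\<And>x. \<bar>phir x\<bar> \<le> B" using phir_bounded by blast
  have i1: "integrable lborel (\<lambda>y. f y * ps_hat y ^ 2 * phir (- y))"
  proof -
    have "integrable lborel (\<lambda>y. f y * (ps_hat y ^ 2 * phir (- y)))"
    proof (rule integrable_mult_bounded[OF f_int, where B=B])
      show "(\<lambda>y. ps_hat y ^ 2 * phir (- y)) \<in> borel_measurable lborel" by measurable
      fix y
      have "\<bar>ps_hat y ^ 2\<bar> \<le> 1" using ps_hat_bound[of y] by (simp add: abs_square_le_1)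
      from mult_mono[OF this B] show "norm (ps_hat y ^ 2 * phir (- y)) \<le> B"
        by (simp add: abs_mult)
    qed
    thus ?thesis by (simp add: mult.assoc)
  qed
  have i2: "integrable lborel (\<lambda>y. f y * phir (- y))"
    by (rule integrable_mult_bounded[OF f_int _ B[unfolded real_norm_def[symmetric]]]) measurable
  have "Re (h 0) = (\<integral>y. f y * ps_hat y ^ 2 * phir (- y) \<partial>lborel) + (\<integral>y. f y * phir (- y) \<partial>lborel)"
    by (simp add: h_real ps_hat_zero)
  also have "\<dots> \<le> c1 + c2" by (intro add_mono phir_average_le c1 c2 i1 i2)
  finally show ?thesis .
qed

lemma Re_h_zero_neg:
  assumes d20: "d \<le> 1/20" and near: "\<And>y. norm y < 2 * d \<Longrightarrow> \<bar>f y - f 0\<bar> < - f 0 / 4"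
  shows "Re (h 0) < 0"
proof -
  define c where "c = - f 0"
  have c: "c > 0" using A_tildeD(5)[OF fA] by (simp add: c_def)
  have c2: "f y \<le> - c / 2" if "norm y < 2 * d" for y using near[OF that] c by (simp add: c_def)
  have c1: "f y * ps_hat y ^ 2 \<le> - c / 2" if y: "norm y < 2 * d" for y
  proof -
    have A: "\<bar>ps_hat y ^ 2 - 1\<bar> \<le> 2 / 25" by (rule ps_hat_sq_near_one[OF d20 y])
    have B: "\<bar>f y\<bar> \<le> 5 * c / 4" using near[OF y] c by (simp add: c_def)
    have "f y * ps_hat y ^ 2 = f y + f y * (ps_hat y ^ 2 - 1)" by (simp add: algebra_simps)
    also have "\<dots> \<le> f y + \<bar>f y\<bar> * \<bar>ps_hat y ^ 2 - 1\<bar>" by (simp add: abs_mult[symmetric])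
    also have "\<dots> \<le> f y + (5 * c / 4) * (2 / 25)"
      using A B by (intro add_left_mono mult_mono) auto
    also have "\<dots> \<le> - c / 2" using near[OF y] c by (simp add: c_def)
    finally show ?thesis .
  qed
  show ?thesis using Re_h_zero_le[OF c1 c2] c by simp
qed

lemma Re_h_nonneg:
  assumes e: "2 * d \<le> e" and x: "rad f + e \<le> norm x"
  shows "0 \<le> Re (h x)"
proof -
  have key: "0 \<le> f y * phir (x - y)" for y
  proof (cases "phir (x - y) = 0")
    case False
    hence "norm (x - y) < 2 * d" by (rule phir_supp)
    hence "rad f < norm y" using e x norm_triangle_ineq2[of x y] by linarith
    hence "0 \<le> f y" by (rule rad_nonneg_beyond[OF A_tildeD(7)[OF fA]])
    thus ?thesis using phir_nonneg by simp
  qed simp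
  have "0 \<le> (\<integral>y. (f y * phir (x - y)) * ps_hat y ^ 2 \<partial>lborel)"
    by (rule integral_nonneg_AE, rule AE_I2) (simp add: key)
  moreover have "0 \<le> (\<integral>y. f y * phir (x - y) \<partial>lborel)"
    by (rule integral_nonneg_AE, rule AE_I2) (rule key)
  ultimately show ?thesis by (simp add: h_real mult_ac)
qed

lemma rad_Re_h_le:
  assumes "0 < e" "2 * d \<le> e"
  shows "rad (\<lambda>x. Re (h x)) \<le> rad f + e"
  using assms rad_nonneg[OF A_tildeD(7)[OF fA]]
  by (intro rad_le Re_h_nonneg) auto

end

theorem lemma4:
  fixes f :: "real^'n::finite \<Rightarrow> real"
    and \<psi> :: "real \<Rightarrow> real^'n \<Rightarrow> real"
    and \<epsilon> :: real
  assumes f: "f \<in> A_tilde"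
    and psi_nonneg: "\<And>\<delta> x. \<delta> > 0 \<Longrightarrow> \<psi> \<delta> x \<ge> 0"
    and psi_radial: "\<And>\<delta> x y. \<delta> > 0 \<Longrightarrow> norm x = norm y \<Longrightarrow> \<psi> \<delta> x = \<psi> \<delta> y"
    and psi_smooth: "\<And>\<delta>. \<delta> > 0 \<Longrightarrow> smooth_fun (\<psi> \<delta>)"
    and psi_supp: "\<And>\<delta>. \<delta> > 0 \<Longrightarrow> closure {x. \<psi> \<delta> x \<noteq> 0} \<subseteq> ball 0 \<delta>"
    and psi_int: "\<And>\<delta>. \<delta> > 0 \<Longrightarrow> integrable lebesgue (\<psi> \<delta>)"
    and psi_L1: "\<And>\<delta>. \<delta> > 0 \<Longrightarrow> (\<integral>x. \<bar>\<psi> \<delta> x\<bar> \<partial>lebesgue) = 1"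
    and eps: "\<epsilon> > 0"
  shows "\<exists>\<delta>>0.
    (let \<phi> = conv (\<lambda>x. complex_of_real (\<psi> \<delta> x)) (\<lambda>x. complex_of_real (\<psi> \<delta> x));
         g = conv (\<lambda>x. complex_of_real (f x)) \<phi>;
         h = (\<lambda>x. conv (fourier g) \<phi> x + g x * fourier \<phi> x)
     in (\<forall>x. Im (h x) = 0) \<and> schwartz h \<and> fourier h = h \<and> Re (h 0) < 0
        \<and> rad (\<lambda>x. Re (h x)) \<le> rad f + \<epsilon>)"
proof -
  have "isCont f 0" using A_tildeD(1)[OF f] by (simp add: continuous_on_eq_continuous_at)
  moreover have "- f 0 / 4 > 0" using A_tildeD(5)[OF f] by simp
  ultimately obtain \<eta> where \<eta>: "\<eta> > 0" and near: "\<And>y. norm y < \<eta> \<Longrightarrow> \<bar>f y - f 0\<bar> < - f 0 / 4"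
    unfolding continuous_at_eps_delta by (metis dist_norm diff_zero real_norm_def)
  define \<delta> where "\<delta> = min (\<epsilon> / 2) (min (\<eta> / 2) (1 / 20))"
  have \<delta>: "\<delta> > 0" using eps \<eta> by (simp add: \<delta>_def)
  interpret smoothing "\<psi> \<delta>" \<delta> f
  proof unfold_locales
    show "\<psi> \<delta> (- x) = \<psi> \<delta> x" for x by (rule psi_radial[OF \<delta>]) simp
    show "norm x < \<delta>" if "\<psi> \<delta> x \<noteq> 0" for x
      using psi_supp[OF \<delta>] closure_subset[of "{x. \<psi> \<delta> x \<noteq> 0}"] that by auto
  qed (use \<delta> psi_nonneg psi_smooth psi_L1 f in auto)
  have "Re (h 0) < 0" by (rule Re_h_zero_neg) (use near in \<open>auto simp: \<delta>_def\<close>)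
  moreover have "rad (\<lambda>x. Re (h x)) \<le> rad f + \<epsilon>" by (rule rad_Re_h_le) (use eps in \<open>auto simp: \<delta>_def\<close>)
  ultimately show ?thesis
    using \<delta> Im_h schwartz_h fourier_h unfolding Let_def h_def g_def F_def phi_def psc_def by auto
qed

end
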